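(* Setting: $\mathcal{G}$ is a connected undirected graph with nodes $\{1,\dots,n\}$, edges $\{1,\dots,m\}$ and incidence matrix $B\in\mathbb{R}^{n\times m}$; $p\ge1$ and $E=\begin{bmatrix} I_{p}\\ \mathbf{0}_{(n-p)\times p}\end{bmatrix}$. $T_x,T_\mu,T_\xi,T_\theta,T_\phi$ are diagonal matrices (of sizes $n,m,m,p,p$) with strictly positive diagonal entries, $d\in\mathbb{R}^n$ is a constant (unknown) vector, $h(x)=(h_1(x_1),\dots,h_n(x_n))^T$ with each $h_i$ continuously differentiable and strictly increasing, and $\overline y\in\mathbb{R}^n$ satisfies $\overline y_i\in\mathcal{R}(h_i)$ for all $i$. $Q=\operatorname{diag}(q_1,\dots,q_p)$ with $q_i>0$, $r\in\mathbb{R}^p$, and $L^{com}$ is the Laplacian of a balanced, strongly connected weighted directed graph on $\{1,\dots,p\}$. Let $\overline u=Q^{-1}(\kappa-r)$ with $\kappa=E^T\frac{\mathbb{1}_n\mathbb{1}_n^T}{\mathbb{1}_p^TQ^{-1}\mathbb{1}_p}(d+EQ^{-1}r)$. The maps $f(\mu)=(f_1(\mu_1),\dots,f_m(\mu_m))^T$ and $g(\theta)=(g_1(\theta_1),\dots,g_p(\theta_p))^T$ have components that are continuously differentiable and strictly increasing with $\mathcal{R}(f_k)=(\lambda_k^-,\lambda_k^+)$ and $\mathcal{R}(g_i)=(u_i^-,u_i^+)$, and there exists $\omega\in\mathbb{R}^m$ with $[B^\dagger(E\overline u-d)+(I-B^\dagger B)\omega]_k\in\mathcal{R}(f_k)$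 for all $k$, while $\overline u_i\in\mathcal{R}(g_i)$ for all $i$. Consider the flow network $T_x\dot x=-B\lambda+Eu-d$, $y=h(x)$, in closed loop with the flow controller $T_\mu\dot\mu=B^T(h(x)-\overline y)-(f(\mu)-\xi)$, $T_\xi\dot\xi=f(\mu)-\xi$, $\lambda=f(\mu)$, and the input controller $T_\theta\dot\theta=-E^T(h(x)-\overline y)-(g(\theta)-\phi)$, $T_\phi\dot\phi=g(\theta)-\phi-QL^{com}(Q\phi+r)$, $u=g(\theta)$. Let $(\overline x,\overline\mu,\overline\xi,\overline\theta,\overline\phi)$ be any equilibrium of this closed-loop system and $$\Upsilon_1=\{(x,\mu,\xi,\theta,\phi):\ B(f(\mu)-f(\overline\mu))=\mathbf{0},\ B(\xi-\overline\xi)=\mathbf{0},\ x=\overline x,\ \theta=\overline\theta,\ \phi=\overline\phi\}.$$ Then, for every initial condition, the solution of the closed-loop system converges to a point in $\Upsilon_1$, at which $\lambda=f(\mu)$ is constant, $h(x)=\overline y$ and $u=g(\theta)=\overline u$. Moreover, $u_i^-<u_i(t)<u_i^+$ for all $i\in\{1,\dots,p\}$ and $\lambda_k^-<\lambda_k(t)<\lambda_k^+$ for all $k\in\{1,\dots,m\}$, for all $t\ge0$.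
   Context: $\mathcal{R}(\cdot)$ denotes the range of a function; $B^\dagger$ is the Moore–Penrose pseudoinverse; $\mathbb{1}_k$ is the all-ones vector of length $k$. The incidence matrix $B$ is obtained by arbitrarily orienting each edge: $b_{ik}=+1$ if node $i$ is the positive end of edge $k$, $-1$ if the negative end, $0$ otherwise. The bounds $\lambda_k^-<\lambda_k^+$ and $u_i^-<u_i^+$ are given constants (infinite values allowed, corresponding to unconstrained flows/inputs). A weighted directed graph is balanced if at every node weighted in-degree equals weighted out-degree; $L^{com}=D-A$ with $A$ the weighted adjacency matrix and $D$ the diagonal matrix of weighted out-degrees. The vector $\overline u$ is the minimizer of $\frac12u^TQu+r^Tu$ subject to $\mathbf{0}=-B\lambda+Eu-d$. *)

theory Defs
  imports Complex_Main "HOL-Library.Extended_Real"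
begin

text \<open>Vectors and matrices of varying dimension are represented as functions
  nat => real and nat => nat => real; only the entries with indices below the
  relevant dimension are meaningful.  Nodes are 0..n-1, edges 0..m-1, inputs 0..p-1.\<close>

definition incidence :: "(nat \<Rightarrow> nat) \<Rightarrow> (nat \<Rightarrow> nat) \<Rightarrow> nat \<Rightarrow> nat \<Rightarrow> real" where
  "incidence epos eneg i k = (if i = epos k then 1 else if i = eneg k then -1 else 0)"

definition graph_ok :: "nat \<Rightarrow> nat \<Rightarrow> (nat \<Rightarrow> nat) \<Rightarrow> (nat \<Rightarrow> nat) \<Rightarrow> bool" where
  "graph_ok n m epos eneg \<longleftrightarrow> (\<forall>k<m. epos k < n \<and> eneg k < n \<and> epos k \<noteq> eneg k)"

definition und_adj :: "nat \<Rightarrow> (nat \<Rightarrow> nat) \<Rightarrow> (nat \<Rightarrow> nat) \<Rightarrow> nat \<Rightarrow> nat \<Rightarrow> bool" where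
  "und_adj m epos eneg i j \<longleftrightarrow>
     (\<exists>k<m. (epos k = i \<and> eneg k = j) \<or> (epos k = j \<and> eneg k = i))"

definition graph_connected :: "nat \<Rightarrow> nat \<Rightarrow> (nat \<Rightarrow> nat) \<Rightarrow> (nat \<Rightarrow> nat) \<Rightarrow> bool" where
  "graph_connected n m epos eneg \<longleftrightarrow> (\<forall>i<n. \<forall>j<n. (und_adj m epos eneg)\<^sup>*\<^sup>* i j)"

definition mmul :: "nat \<Rightarrow> (nat \<Rightarrow> nat \<Rightarrow> real) \<Rightarrow> (nat \<Rightarrow> nat \<Rightarrow> real) \<Rightarrow> nat \<Rightarrow> nat \<Rightarrow> real" where
  "mmul k A C = (\<lambda>i j. \<Sum>l<k. A i l * C l j)"

text \<open>Moore--Penrose conditions for X (m x n) to be the pseudoinverse of B (n x m);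
  X is required to vanish outside its m x n block so that it is unique.\<close>
definition penrose :: "nat \<Rightarrow> nat \<Rightarrow> (nat \<Rightarrow> nat \<Rightarrow> real) \<Rightarrow> (nat \<Rightarrow> nat \<Rightarrow> real) \<Rightarrow> bool" where
  "penrose n m B X \<longleftrightarrow>
     (\<forall>i j. \<not> (i < m \<and> j < n) \<longrightarrow> X i j = 0) \<and>
     (\<forall>i<n. \<forall>j<m. mmul n (mmul m B X) B i j = B i j) \<and>
     (\<forall>i<m. \<forall>j<n. mmul m (mmul n X B) X i j = X i j) \<and>
     (\<forall>i<n. \<forall>j<n. mmul m B X i j = mmul m B X j i) \<and>
     (\<forall>i<m. \<forall>j<m. mmul n X B i j = mmul n X B j i)"

definition pinv :: "nat \<Rightarrow> nat \<Rightarrow> (nat \<Rightarrow> nat \<Rightarrow> real) \<Rightarrow> nat \<Rightarrow> nat \<Rightarrow> real" where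
  "pinv n m B = (THE X. penrose n m B X)"

definition C1_strict_incr :: "(real \<Rightarrow> real) \<Rightarrow> bool" where
  "C1_strict_incr \<phi> \<longleftrightarrow> strict_mono \<phi> \<and>
     (\<exists>\<phi>'. (\<forall>s. (\<phi> has_real_derivative \<phi>' s) (at s)) \<and> continuous_on UNIV \<phi>')"

definition open_ival :: "ereal \<Rightarrow> ereal \<Rightarrow> real set" where
  "open_ival lo hi = {s. lo < ereal s \<and> ereal s < hi}"

text \<open>Weighted digraph on 0..p-1 with adjacency weights a (a i j >= 0 is the weight of i -> j).\<close>
definition weighted_digraph :: "nat \<Rightarrow> (nat \<Rightarrow> nat \<Rightarrow> real) \<Rightarrow> bool" where
  "weighted_digraph p a \<longleftrightarrow> (\<forall>i<p. \<forall>j<p. a i j \<ge> 0)"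

definition balanced :: "nat \<Rightarrow> (nat \<Rightarrow> nat \<Rightarrow> real) \<Rightarrow> bool" where
  "balanced p a \<longleftrightarrow> (\<forall>i<p. (\<Sum>j<p. a j i) = (\<Sum>j<p. a i j))"

definition strongly_connected :: "nat \<Rightarrow> (nat \<Rightarrow> nat \<Rightarrow> real) \<Rightarrow> bool" where
  "strongly_connected p a \<longleftrightarrow>
     (\<forall>i<p. \<forall>j<p. (\<lambda>u v. u < p \<and> v < p \<and> a u v > 0)\<^sup>*\<^sup>* i j)"

definition laplacian :: "nat \<Rightarrow> (nat \<Rightarrow> nat \<Rightarrow> real) \<Rightarrow> nat \<Rightarrow> nat \<Rightarrow> real" where
  "laplacian p a i j = (if i = j then (\<Sum>l<p. a i l) else 0) - a i j"

text \<open>ubar = Q^{-1}(kappa - r), kappa = E^T 1 1^T (d + E Q^{-1} r) / (1^T Q^{-1} 1);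
  Q = diag(q).\<close>
definition kappa :: "nat \<Rightarrow> nat \<Rightarrow> (nat \<Rightarrow> real) \<Rightarrow> (nat \<Rightarrow> real) \<Rightarrow> (nat \<Rightarrow> real) \<Rightarrow> nat \<Rightarrow> real" where
  "kappa n p q r d = (\<lambda>i. (\<Sum>l<n. d l + (if l < p then r l / q l else 0)) / (\<Sum>j<p. 1 / q j))"

definition ubar :: "nat \<Rightarrow> nat \<Rightarrow> (nat \<Rightarrow> real) \<Rightarrow> (nat \<Rightarrow> real) \<Rightarrow> (nat \<Rightarrow> real) \<Rightarrow> nat \<Rightarrow> real" where
  "ubar n p q r d = (\<lambda>i. (kappa n p q r d i - r i) / q i)"

text \<open>E u for E = [I_p; 0].\<close>
definition Emul :: "nat \<Rightarrow> (nat \<Rightarrow> real) \<Rightarrow> nat \<Rightarrow> real" where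
  "Emul p u = (\<lambda>i. if i < p then u i else 0)"

text \<open>Right-hand sides (before multiplication with T^{-1}) of the closed loop.\<close>
definition rhs_x :: "nat \<Rightarrow> nat \<Rightarrow> (nat \<Rightarrow> nat \<Rightarrow> real) \<Rightarrow> (nat \<Rightarrow> real \<Rightarrow> real) \<Rightarrow> (nat \<Rightarrow> real \<Rightarrow> real)
    \<Rightarrow> (nat \<Rightarrow> real) \<Rightarrow> (nat \<Rightarrow> real) \<Rightarrow> (nat \<Rightarrow> real) \<Rightarrow> nat \<Rightarrow> real" where
  "rhs_x m p B f g d \<mu> \<theta> i =
     - (\<Sum>k<m. B i k * f k (\<mu> k)) + Emul p (\<lambda>j. g j (\<theta> j)) i - d i"

definition rhs_mu :: "nat \<Rightarrow> (nat \<Rightarrow> nat \<Rightarrow> real) \<Rightarrow> (nat \<Rightarrow> real \<Rightarrow> real) \<Rightarrow> (nat \<Rightarrow> real \<Rightarrow> real)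
    \<Rightarrow> (nat \<Rightarrow> real) \<Rightarrow> (nat \<Rightarrow> real) \<Rightarrow> (nat \<Rightarrow> real) \<Rightarrow> (nat \<Rightarrow> real) \<Rightarrow> nat \<Rightarrow> real" where
  "rhs_mu n B h f ybar x \<mu> \<xi> k =
     (\<Sum>i<n. B i k * (h i (x i) - ybar i)) - (f k (\<mu> k) - \<xi> k)"

definition rhs_xi :: "(nat \<Rightarrow> real \<Rightarrow> real) \<Rightarrow> (nat \<Rightarrow> real) \<Rightarrow> (nat \<Rightarrow> real) \<Rightarrow> nat \<Rightarrow> real" where
  "rhs_xi f \<mu> \<xi> k = f k (\<mu> k) - \<xi> k"

definition rhs_theta :: "(nat \<Rightarrow> real \<Rightarrow> real) \<Rightarrow> (nat \<Rightarrow> real \<Rightarrow> real) \<Rightarrow> (nat \<Rightarrow> real)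
    \<Rightarrow> (nat \<Rightarrow> real) \<Rightarrow> (nat \<Rightarrow> real) \<Rightarrow> (nat \<Rightarrow> real) \<Rightarrow> nat \<Rightarrow> real" where
  "rhs_theta h g ybar x \<theta> \<phi> i = - (h i (x i) - ybar i) - (g i (\<theta> i) - \<phi> i)"

definition rhs_phi :: "nat \<Rightarrow> (nat \<Rightarrow> nat \<Rightarrow> real) \<Rightarrow> (nat \<Rightarrow> real) \<Rightarrow> (nat \<Rightarrow> real)
    \<Rightarrow> (nat \<Rightarrow> real \<Rightarrow> real) \<Rightarrow> (nat \<Rightarrow> real) \<Rightarrow> (nat \<Rightarrow> real) \<Rightarrow> nat \<Rightarrow> real" where
  "rhs_phi p L q r g \<theta> \<phi> i =
     g i (\<theta> i) - \<phi> i - q i * (\<Sum>j<p. L i j * (q j * \<phi> j + r j))"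

end

theory Submission
  imports Defs "HOL-Analysis.Analysis"
begin

(* The proof is a LaSalle-type argument made explicit.  For a continuous strictly increasing F let
   bregman F c v = \<integral>_c^v (F s - F c) ds.  Around the equilibrium, the function
     V = \<Sum> tx bregman h xb x + \<Sum> tmu bregman f mub \<mu> + \<Sum> txi (\<xi> - xib)^2/2
         + \<Sum> tth bregman g thb \<theta> + \<Sum> tph (\<phi> - phb)^2/2
   satisfies V' = -W with W = |f(\<mu>) - \<xi>|^2 + |g(\<theta>) - \<phi>|^2 + z^T L z, z = Q(\<phi> - ubar), and W >= 0
   because L is the Laplacian of a balanced digraph.  So the trajectory is bounded, W is uniformly
   Lipschitz in time and Barbalat's lemma gives W -> 0.  A variant of Barbalat's lemma (if s' = a + b
   with a Lipschitz, b -> 0 and s slowly varying, then a -> 0) propagates convergence through the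
   equations: the \<theta>-equations give h(x) -> ybar at the input nodes, the \<mu>-equations carry this
   along the edges of the connected graph to all nodes, and the conservation law for \<Sum> tx x
   forces the consensus value of z to be 0, whence \<phi> and \<theta> converge.
   The pair (\<mu>, \<xi>) converges along a subsequence to another equilibrium; V centred there tends to 0
   along the subsequence and is nonincreasing, hence tends to 0, and so (\<mu>, \<xi>) converges. *)

definition has_deriv_on_halfline :: "(real \<Rightarrow> real) \<Rightarrow> (real \<Rightarrow> real) \<Rightarrow> bool" where
  "has_deriv_on_halfline y y' \<longleftrightarrow> (\<forall>t\<ge>0. (y has_real_derivative y' t) (at t within {0..}))"

lemma has_deriv_on_halfline_within_interval:
  assumes "has_deriv_on_halfline y y'" "0 \<le> a" "a \<le> x" "x \<le> b"
  shows "(y has_real_derivative y' x) (at x within {a..b})"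
  using assms unfolding has_deriv_on_halfline_def
  by (meson has_field_derivative_subset atLeastAtMost_iff atLeast_iff order_trans subsetI)

lemma increment_ge_if_deriv_ge:
  assumes "has_deriv_on_halfline y y'" "0 \<le> a" "a \<le> b" "\<forall>x\<in>{a..b}. y' x \<ge> c"
  shows "y b - y a \<ge> c * (b - a)"
proof -
  have "\<exists>x\<in>{a..b}. y b - y a = (\<lambda>h. y' x * h) (b - a)"
    apply (rule mvt_very_simple[OF assms(3)])
    using has_deriv_on_halfline_within_interval[OF assms(1,2)] by (simp add: has_field_derivative_def)
  then obtain x where "x \<in> {a..b}" "y b - y a = y' x * (b - a)" by auto
  then show ?thesis using assms(3,4) by (simp add: mult_right_mono)
qed

lemma increment_le_if_deriv_le:
  assumes "has_deriv_on_halfline y y'" "0 \<le> a" "a \<le> b" "\<forall>x\<in>{a..b}. y' x \<le> c"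
  shows "y b - y a \<le> c * (b - a)"
proof -
  have "has_deriv_on_halfline (\<lambda>t. - y t) (\<lambda>t. - y' t)"
    using assms(1) unfolding has_deriv_on_halfline_def by (auto intro: derivative_intros)
  from increment_ge_if_deriv_ge[OF this assms(2,3), of "-c"] assms(4) show ?thesis by auto
qed

lemma abs_increment_le_if_abs_deriv_le:
  assumes "has_deriv_on_halfline y y'" "0 \<le> a" "a \<le> b" "\<forall>x\<in>{a..b}. \<bar>y' x\<bar> \<le> c"
  shows "\<bar>y b - y a\<bar> \<le> c * (b - a)"
proof -
  have "y b - y a \<ge> (-c) * (b - a)"
    by (rule increment_ge_if_deriv_ge[OF assms(1-3)]) (use assms(4) in \<open>auto simp: abs_le_iff\<close>)
  moreover have "y b - y a \<le> c * (b - a)"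
    using increment_le_if_deriv_le[OF assms(1-3), of c] assms(4) by (auto simp: abs_le_iff)
  ultimately show ?thesis by auto
qed

lemma antimono_if_deriv_nonpos:
  assumes "has_deriv_on_halfline y y'" "\<forall>t\<ge>0. y' t \<le> 0" "0 \<le> s" "s \<le> t"
  shows "y t \<le> y s"
  using increment_le_if_deriv_le[OF assms(1) assms(3,4), of 0] assms(2,3) by auto

lemma has_deriv_on_halfline_add:
  "has_deriv_on_halfline y y' \<Longrightarrow> has_deriv_on_halfline z z' \<Longrightarrow>
   has_deriv_on_halfline (\<lambda>t. y t + z t) (\<lambda>t. y' t + z' t)"
  unfolding has_deriv_on_halfline_def by (auto intro: DERIV_add)

lemma has_deriv_on_halfline_sum:
  assumes "\<forall>i\<in>S. has_deriv_on_halfline (\<lambda>t. y t i) (\<lambda>t. y' t i)"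
  shows "has_deriv_on_halfline (\<lambda>t. \<Sum>i\<in>S. y t i) (\<lambda>t. \<Sum>i\<in>S. y' t i)"
  using assms unfolding has_deriv_on_halfline_def by (auto intro: DERIV_sum)

lemma has_deriv_on_halfline_scaled_square:
  assumes "has_deriv_on_halfline y (\<lambda>t. D t / c)" "c \<noteq> 0"
  shows "has_deriv_on_halfline (\<lambda>t. c * (y t - z)^2 / 2) (\<lambda>t. (y t - z) * D t)"
  unfolding has_deriv_on_halfline_def
proof (intro allI impI)
  fix t :: real assume "t \<ge> 0"
  then have "((\<lambda>s. c * (y s - z)^2 / 2) has_real_derivative
      c * (2 * (y t - z) * (D t / c)) / 2) (at t within {0..})"
    using assms(1) unfolding has_deriv_on_halfline_def
    by (auto intro!: derivative_eq_intros simp: power2_eq_square)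
  moreover have "c * (2 * (y t - z) * (D t / c)) / 2 = (y t - z) * D t"
    using assms(2) by (simp add: field_simps)
  ultimately show "((\<lambda>s. c * (y s - z)^2 / 2) has_real_derivative (y t - z) * D t) (at t within {0..})"
    by simp
qed

definition bdd_halfline :: "(real \<Rightarrow> real) \<Rightarrow> bool" where
  "bdd_halfline y \<longleftrightarrow> (\<exists>M. \<forall>t\<ge>0. \<bar>y t\<bar> \<le> M)"

definition lipschitz_halfline :: "(real \<Rightarrow> real) \<Rightarrow> bool" where
  "lipschitz_halfline y \<longleftrightarrow> (\<exists>K. \<forall>s\<ge>0. \<forall>t\<ge>0. \<bar>y t - y s\<bar> \<le> K * \<bar>t - s\<bar>)"

definition bdd_lipschitz :: "(real \<Rightarrow> real) \<Rightarrow> bool" where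
  "bdd_lipschitz y \<longleftrightarrow> bdd_halfline y \<and> lipschitz_halfline y"

lemma bdd_halfline_const: "bdd_halfline (\<lambda>t. c)"
  unfolding bdd_halfline_def by auto

lemma bdd_halfline_add: "bdd_halfline y \<Longrightarrow> bdd_halfline z \<Longrightarrow> bdd_halfline (\<lambda>t. y t + z t)"
  unfolding bdd_halfline_def
proof (elim exE)
  fix M1 M2 assume "\<forall>t\<ge>0. \<bar>y t\<bar> \<le> M1" "\<forall>t\<ge>0. \<bar>z t\<bar> \<le> M2"
  then show "\<exists>M. \<forall>t\<ge>0. \<bar>y t + z t\<bar> \<le> M" by (intro exI[of _ "M1 + M2"]) (smt (verit))
qed

lemma bdd_halfline_mult: "bdd_halfline y \<Longrightarrow> bdd_halfline z \<Longrightarrow> bdd_halfline (\<lambda>t. y t * z t)"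
  unfolding bdd_halfline_def
proof (elim exE)
  fix M1 M2 assume "\<forall>t\<ge>0. \<bar>y t\<bar> \<le> M1" "\<forall>t\<ge>0. \<bar>z t\<bar> \<le> M2"
  then show "\<exists>M. \<forall>t\<ge>0. \<bar>y t * z t\<bar> \<le> M"
    by (intro exI[of _ "M1 * M2"]) (simp add: abs_mult mult_mono')
qed

lemma bdd_halfline_minus: "bdd_halfline y \<Longrightarrow> bdd_halfline (\<lambda>t. - y t)"
  unfolding bdd_halfline_def by auto

lemma bdd_halfline_diff: "bdd_halfline y \<Longrightarrow> bdd_halfline z \<Longrightarrow> bdd_halfline (\<lambda>t. y t - z t)"
  using bdd_halfline_add[OF _ bdd_halfline_minus[of z]] by simp

lemma bdd_halfline_divide: "bdd_halfline y \<Longrightarrow> bdd_halfline (\<lambda>t. y t / c)"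
  using bdd_halfline_mult[OF _ bdd_halfline_const[of "1 / c"], of y] by simp

lemma bdd_halfline_sum:
  "finite S \<Longrightarrow> \<forall>i\<in>S. bdd_halfline (\<lambda>t. y t i) \<Longrightarrow> bdd_halfline (\<lambda>t. \<Sum>i\<in>S. y t i)"
proof (induction S rule: finite_induct)
  case empty then show ?case using bdd_halfline_const[of 0] by simp
next
  case (insert x F) then show ?case using bdd_halfline_add[of "\<lambda>t. y t x"] by simp
qed

lemma bdd_halfline_cont_comp:
  assumes "\<forall>x. isCont F x" "bdd_halfline y"
  shows "bdd_halfline (\<lambda>t. F (y t))"
proof -
  obtain M where M: "\<forall>t\<ge>0. \<bar>y t\<bar> \<le> M" using assms(2) unfolding bdd_halfline_def by auto
  have "\<exists>K. \<forall>x. -M \<le> x \<and> x \<le> M \<longrightarrow> \<bar>F x\<bar> \<le> K"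
  proof (cases "-M \<le> M")
    case True
    show ?thesis by (rule isCont_bounded[OF True]) (use assms(1) in \<open>auto intro: continuous_intros\<close>)
  qed auto
  then obtain K where "\<forall>x. -M \<le> x \<and> x \<le> M \<longrightarrow> \<bar>F x\<bar> \<le> K" by auto
  then have "\<forall>t\<ge>0. \<bar>F (y t)\<bar> \<le> K" using M by (auto simp: abs_le_iff)
  then show ?thesis unfolding bdd_halfline_def by auto
qed

lemma lipschitz_halfline_if_deriv_bdd:
  assumes "has_deriv_on_halfline y y'" "\<forall>t\<ge>0. \<bar>y' t\<bar> \<le> K"
  shows "lipschitz_halfline y"
  unfolding lipschitz_halfline_def
proof (intro exI allI impI)
  fix s t :: real assume st: "0 \<le> s" "0 \<le> t"
  show "\<bar>y t - y s\<bar> \<le> K * \<bar>t - s\<bar>"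
  proof (cases "s \<le> t")
    case True
    then show ?thesis using abs_increment_le_if_abs_deriv_le[OF assms(1) st(1) True, of K] assms(2) st by auto
  next
    case False
    then show ?thesis using abs_increment_le_if_abs_deriv_le[OF assms(1) st(2), of s K] assms(2) st by auto
  qed
qed

lemma bdd_lipschitz_if_deriv_bdd:
  "bdd_halfline y \<Longrightarrow> has_deriv_on_halfline y y' \<Longrightarrow> bdd_halfline y' \<Longrightarrow> bdd_lipschitz y"
  using lipschitz_halfline_if_deriv_bdd unfolding bdd_lipschitz_def bdd_halfline_def by blast

lemma C1_lipschitz_on_bounded:
  assumes "\<forall>x. (F has_real_derivative F' x) (at x)" "continuous_on UNIV F'"
  shows "\<exists>K\<ge>0. \<forall>a b. \<bar>a\<bar> \<le> M \<longrightarrow> \<bar>b\<bar> \<le> M \<longrightarrow> \<bar>F b - F a\<bar> \<le> K * \<bar>b - a\<bar>"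
proof -
  have "\<forall>x. isCont F' x" using assms(2) by (simp add: continuous_on_eq_continuous_at)
  then have "\<exists>K. \<forall>x. -M \<le> x \<and> x \<le> M \<longrightarrow> \<bar>F' x\<bar> \<le> K"
    using isCont_bounded[of "-M" M "\<lambda>x. \<bar>F' x\<bar>"] by (cases "-M \<le> M") (auto intro: continuous_intros)
  then obtain K where K: "\<forall>x. -M \<le> x \<and> x \<le> M \<longrightarrow> \<bar>F' x\<bar> \<le> K" by auto
  have main: "\<bar>F b - F a\<bar> \<le> max K 0 * \<bar>b - a\<bar>" if "\<bar>a\<bar> \<le> M" "\<bar>b\<bar> \<le> M" "a < b" for a b
  proof -
    obtain z where z: "a < z" "z < b" "F b - F a = (b - a) * F' z"
      using MVT2[OF \<open>a < b\<close>, of F F'] assms(1) by auto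
    have "-M \<le> z \<and> z \<le> M" using z that by (auto simp: abs_le_iff)
    then have "\<bar>F' z\<bar> \<le> max K 0" using K by force
    then have "\<bar>(b - a) * F' z\<bar> \<le> \<bar>b - a\<bar> * max K 0"
      by (simp add: abs_mult mult_left_mono)
    then show ?thesis using z by (simp add: mult.commute)
  qed
  have "\<bar>F b - F a\<bar> \<le> max K 0 * \<bar>b - a\<bar>" if "\<bar>a\<bar> \<le> M" "\<bar>b\<bar> \<le> M" for a b
    using main[OF that] main[OF that(2,1)] by (cases a b rule: linorder_cases) (auto simp: abs_minus_commute)
  then show ?thesis by (intro exI[of _ "max K 0"]) auto
qed

lemma bdd_lipschitz_C1_comp:
  assumes "C1_strict_incr F" "bdd_lipschitz y"
  shows "bdd_lipschitz (\<lambda>t. F (y t))"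
proof -
  obtain F' where F': "\<forall>x. (F has_real_derivative F' x) (at x)" "continuous_on UNIV F'"
    using assms(1) unfolding C1_strict_incr_def by blast
  obtain M where M: "\<forall>t\<ge>0. \<bar>y t\<bar> \<le> M"
    using assms(2) unfolding bdd_lipschitz_def bdd_halfline_def by auto
  obtain L where L: "\<forall>s\<ge>0. \<forall>t\<ge>0. \<bar>y t - y s\<bar> \<le> L * \<bar>t - s\<bar>"
    using assms(2) unfolding bdd_lipschitz_def lipschitz_halfline_def by auto
  obtain K where K: "K \<ge> 0" "\<forall>a b. \<bar>a\<bar> \<le> M \<longrightarrow> \<bar>b\<bar> \<le> M \<longrightarrow> \<bar>F b - F a\<bar> \<le> K * \<bar>b - a\<bar>"
    using C1_lipschitz_on_bounded[OF F'] by blast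
  have "lipschitz_halfline (\<lambda>t. F (y t))"
    unfolding lipschitz_halfline_def
  proof (intro exI[of _ "K * L"] allI impI)
    fix s t :: real assume st: "0 \<le> s" "0 \<le> t"
    have "\<bar>F (y t) - F (y s)\<bar> \<le> K * \<bar>y t - y s\<bar>" using K M st by auto
    also have "\<dots> \<le> K * (L * \<bar>t - s\<bar>)" using L st K(1) by (simp add: mult_left_mono)
    finally show "\<bar>F (y t) - F (y s)\<bar> \<le> K * L * \<bar>t - s\<bar>" by simp
  qed
  moreover have "\<forall>x. isCont F x" using F'(1) by (metis DERIV_isCont)
  ultimately show ?thesis
    using bdd_halfline_cont_comp assms(2) unfolding bdd_lipschitz_def by blast
qed

lemma bdd_lipschitz_const: "bdd_lipschitz (\<lambda>t. c)"
  unfolding bdd_lipschitz_def bdd_halfline_def lipschitz_halfline_def by (auto intro: exI[of _ 0])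

lemma bdd_lipschitz_add: "bdd_lipschitz y \<Longrightarrow> bdd_lipschitz z \<Longrightarrow> bdd_lipschitz (\<lambda>t. y t + z t)"
  unfolding bdd_lipschitz_def bdd_halfline_def lipschitz_halfline_def
proof (elim conjE exE, intro conjI)
  fix M1 M2 K1 K2
  assume h: "\<forall>t\<ge>0. \<bar>y t\<bar> \<le> M1" "\<forall>t\<ge>0. \<bar>z t\<bar> \<le> M2"
    "\<forall>s\<ge>0. \<forall>t\<ge>0. \<bar>y t - y s\<bar> \<le> K1 * \<bar>t - s\<bar>" "\<forall>s\<ge>0. \<forall>t\<ge>0. \<bar>z t - z s\<bar> \<le> K2 * \<bar>t - s\<bar>"
  show "\<exists>M. \<forall>t\<ge>0. \<bar>y t + z t\<bar> \<le> M"
    using h(1,2) by (intro exI[of _ "M1 + M2"]) (smt (verit))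
  show "\<exists>K. \<forall>s\<ge>0. \<forall>t\<ge>0. \<bar>y t + z t - (y s + z s)\<bar> \<le> K * \<bar>t - s\<bar>"
  proof (intro exI[of _ "K1 + K2"] allI impI)
    fix s t :: real assume "0 \<le> s" "0 \<le> t"
    then have "\<bar>y t - y s\<bar> \<le> K1 * \<bar>t - s\<bar>" "\<bar>z t - z s\<bar> \<le> K2 * \<bar>t - s\<bar>" using h by auto
    then show "\<bar>y t + z t - (y s + z s)\<bar> \<le> (K1 + K2) * \<bar>t - s\<bar>" by (simp add: distrib_right)
  qed
qed

lemma bdd_lipschitz_mult: "bdd_lipschitz y \<Longrightarrow> bdd_lipschitz z \<Longrightarrow> bdd_lipschitz (\<lambda>t. y t * z t)"
  unfolding bdd_lipschitz_def bdd_halfline_def lipschitz_halfline_def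
proof (elim conjE exE, intro conjI)
  fix M1 M2 K1 K2
  assume h: "\<forall>t\<ge>0. \<bar>y t\<bar> \<le> M1" "\<forall>t\<ge>0. \<bar>z t\<bar> \<le> M2"
    "\<forall>s\<ge>0. \<forall>t\<ge>0. \<bar>y t - y s\<bar> \<le> K1 * \<bar>t - s\<bar>" "\<forall>s\<ge>0. \<forall>t\<ge>0. \<bar>z t - z s\<bar> \<le> K2 * \<bar>t - s\<bar>"
  show "\<exists>M. \<forall>t\<ge>0. \<bar>y t * z t\<bar> \<le> M"
    using h(1,2) by (intro exI[of _ "M1 * M2"]) (simp add: abs_mult mult_mono')
  show "\<exists>K. \<forall>s\<ge>0. \<forall>t\<ge>0. \<bar>y t * z t - y s * z s\<bar> \<le> K * \<bar>t - s\<bar>"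
  proof (intro exI[of _ "M1 * K2 + M2 * K1"] allI impI)
    fix s t :: real assume st: "0 \<le> s" "0 \<le> t"
    have e: "y t * z t - y s * z s = y t * (z t - z s) + z s * (y t - y s)" by algebra
    have a: "\<bar>y t * (z t - z s)\<bar> \<le> M1 * (K2 * \<bar>t - s\<bar>)"
      unfolding abs_mult using h st by (intro mult_mono) auto
    have b: "\<bar>z s * (y t - y s)\<bar> \<le> M2 * (K1 * \<bar>t - s\<bar>)"
      unfolding abs_mult using h st by (intro mult_mono) auto
    show "\<bar>y t * z t - y s * z s\<bar> \<le> (M1 * K2 + M2 * K1) * \<bar>t - s\<bar>"
      unfolding e using a b by (simp add: algebra_simps)
  qed
qed

lemma bdd_lipschitz_cmult: "bdd_lipschitz y \<Longrightarrow> bdd_lipschitz (\<lambda>t. c * y t)"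
  using bdd_lipschitz_mult[OF bdd_lipschitz_const[of c], of y] by simp

lemma bdd_lipschitz_minus: "bdd_lipschitz y \<Longrightarrow> bdd_lipschitz (\<lambda>t. - y t)"
  using bdd_lipschitz_cmult[of y "-1"] by simp

lemma bdd_lipschitz_diff: "bdd_lipschitz y \<Longrightarrow> bdd_lipschitz z \<Longrightarrow> bdd_lipschitz (\<lambda>t. y t - z t)"
  using bdd_lipschitz_add[OF _ bdd_lipschitz_minus[of z]] by simp

lemma bdd_lipschitz_divide: "bdd_lipschitz y \<Longrightarrow> bdd_lipschitz (\<lambda>t. y t / c)"
  using bdd_lipschitz_cmult[of y "1 / c"] by simp

lemma bdd_lipschitz_power2: "bdd_lipschitz y \<Longrightarrow> bdd_lipschitz (\<lambda>t. (y t)^2)"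
  using bdd_lipschitz_mult[of y y] by (simp add: power2_eq_square)

lemma bdd_lipschitz_sum:
  "finite S \<Longrightarrow> \<forall>i\<in>S. bdd_lipschitz (\<lambda>t. y t i) \<Longrightarrow> bdd_lipschitz (\<lambda>t. \<Sum>i\<in>S. y t i)"
proof (induction S rule: finite_induct)
  case empty then show ?case using bdd_lipschitz_const[of 0] by simp
next
  case (insert x F) then show ?case using bdd_lipschitz_add[of "\<lambda>t. y t x"] by simp
qed

lemma tendsto_at_top_realI:
  fixes y :: "real \<Rightarrow> real"
  assumes "\<And>e. e > 0 \<Longrightarrow> \<exists>T. \<forall>t\<ge>T. \<bar>y t - l\<bar> < e"
  shows "(y \<longlongrightarrow> l) at_top"
  unfolding tendsto_iff dist_real_def eventually_at_top_linorder using assms by blast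

lemma tendsto_at_top_realD:
  fixes y :: "real \<Rightarrow> real"
  assumes "(y \<longlongrightarrow> l) at_top" "e > 0"
  shows "\<exists>T. \<forall>t\<ge>T. \<bar>y t - l\<bar> < e"
  using assms unfolding tendsto_iff dist_real_def eventually_at_top_linorder by blast

lemma tendsto_zero_if_power2_tendsto_zero:
  fixes y :: "real \<Rightarrow> real"
  assumes "((\<lambda>t. (y t)^2) \<longlongrightarrow> 0) F"
  shows "(y \<longlongrightarrow> 0) F"
proof -
  have "((\<lambda>t. sqrt ((y t)^2)) \<longlongrightarrow> sqrt 0) F" by (intro tendsto_real_sqrt assms)
  then show ?thesis by (simp add: tendsto_rabs_zero_iff)
qed

lemma tendsto_zero_if_le_halfline:
  fixes y W :: "real \<Rightarrow> real"
  assumes "(W \<longlongrightarrow> 0) at_top" "\<forall>t\<ge>0. 0 \<le> y t \<and> y t \<le> W t"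
  shows "(y \<longlongrightarrow> 0) at_top"
proof (rule tendsto_sandwich[OF _ _ tendsto_const assms(1)])
  show "\<forall>\<^sub>F t in at_top. 0 \<le> y t" "\<forall>\<^sub>F t in at_top. y t \<le> W t"
    using assms(2) by (auto simp: eventually_at_top_linorder intro!: exI[of _ 0])
qed

lemma tendsto_along_strict_mono_nat:
  fixes y :: "real \<Rightarrow> real"
  assumes "(y \<longlongrightarrow> l) at_top" "strict_mono r"
  shows "(\<lambda>j. y (real (r j))) \<longlonglongrightarrow> l"
proof -
  have "filterlim (\<lambda>j. real (r j)) at_top sequentially"
    using filterlim_compose[OF filterlim_real_sequentially filterlim_subseq[OF assms(2)]]
    by (simp add: o_def)
  then show ?thesis by (rule filterlim_compose[OF assms(1)])
qed

lemma tendsto_zero_if_antimono_along_subseq: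
  fixes y :: "real \<Rightarrow> real"
  assumes lim: "(\<lambda>j. y (real (r j))) \<longlonglongrightarrow> 0"
    and antimono: "\<And>s t. 0 \<le> s \<Longrightarrow> s \<le> t \<Longrightarrow> y t \<le> y s" and nonneg: "\<And>t. 0 \<le> y t"
  shows "(y \<longlongrightarrow> 0) at_top"
proof (rule tendsto_at_top_realI)
  fix e :: real assume "e > 0"
  then obtain J where "\<bar>y (real (r J))\<bar> < e"
    using lim unfolding LIMSEQ_def dist_real_def by auto
  then have "\<forall>t\<ge>real (r J). \<bar>y t - 0\<bar> < e"
    using antimono[of "real (r J)"] nonneg by force
  then show "\<exists>T. \<forall>t\<ge>T. \<bar>y t - 0\<bar> < e" by blast
qed

lemma bounded_family_convergent_subseq:
  fixes s :: "nat \<Rightarrow> nat \<Rightarrow> real"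
  shows "\<forall>k<m. \<exists>M. \<forall>j. \<bar>s j k\<bar> \<le> M \<Longrightarrow>
         \<exists>r l. strict_mono r \<and> (\<forall>k<m. (\<lambda>j. s (r j) k) \<longlonglongrightarrow> l k)"
proof (induction m)
  case 0 then show ?case by (intro exI[of _ id]) (auto simp: strict_mono_def)
next
  case (Suc m)
  obtain r l where rl: "strict_mono r" "\<forall>k<m. (\<lambda>j. s (r j) k) \<longlonglongrightarrow> l k"
    using Suc by auto
  obtain M where M: "\<forall>j. \<bar>s j m\<bar> \<le> M" using Suc.prems by blast
  obtain r2 where r2: "strict_mono r2" "monoseq (\<lambda>j. s (r (r2 j)) m)"
    using seq_monosub[of "\<lambda>j. s (r j) m"] by auto
  have "Bseq (\<lambda>j. s (r (r2 j)) m)" by (rule BseqI'[of _ M]) (use M in simp)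
  then obtain c where c: "(\<lambda>j. s (r (r2 j)) m) \<longlonglongrightarrow> c"
    using r2(2) Bseq_monoseq_convergent unfolding convergent_def by blast
  have "(\<lambda>j. s (r (r2 j)) k) \<longlonglongrightarrow> (l(m := c)) k" if "k < Suc m" for k
  proof (cases "k < m")
    case True
    then have "((\<lambda>j. s (r j) k) \<circ> r2) \<longlonglongrightarrow> l k" using rl(2) r2(1) LIMSEQ_subseq_LIMSEQ by blast
    then show ?thesis using True by (simp add: o_def)
  next
    case False
    then have "k = m" using that by simp
    then show ?thesis using c by simp
  qed
  moreover have "strict_mono (r \<circ> r2)" using rl(1) r2(1) by (simp add: strict_mono_o)
  ultimately show ?case by (intro exI[of _ "r \<circ> r2"] exI[of _ "l(m := c)"]) (simp add: o_def)
qed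

lemma tendsto_strict_mono_cancel:
  fixes F y :: "real \<Rightarrow> real"
  assumes sm: "strict_mono F" and lim: "((\<lambda>t. F (y t)) \<longlongrightarrow> F c) at_top"
  shows "(y \<longlongrightarrow> c) at_top"
proof (rule tendsto_at_top_realI)
  fix e :: real assume e: "e > 0"
  define \<eta> where "\<eta> = min (F (c + e) - F c) (F c - F (c - e))"
  have "\<eta> > 0" unfolding \<eta>_def using sm e by (simp add: strict_mono_less)
  from tendsto_at_top_realD[OF lim this] obtain T where T: "\<forall>t\<ge>T. \<bar>F (y t) - F c\<bar> < \<eta>" by auto
  have "\<bar>y t - c\<bar> < e" if "t \<ge> T" for t
  proof -
    have "F (y t) < F (c + e)" "F (c - e) < F (y t)" using T that unfolding \<eta>_def by auto
    then show ?thesis using sm by (simp add: strict_mono_less abs_less_iff)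
  qed
  then show "\<exists>T. \<forall>t\<ge>T. \<bar>y t - c\<bar> < e" by blast
qed

section \<open>Barbalat-type lemmas\<close>

lemma barbalat:
  assumes dV: "has_deriv_on_halfline V V'" and V'_le: "\<forall>t\<ge>0. V' t \<le> - W t"
    and V_nonneg: "\<forall>t\<ge>0. V t \<ge> 0" and W_nonneg: "\<forall>t\<ge>0. W t \<ge> 0" and lip: "lipschitz_halfline W"
  shows "(W \<longlongrightarrow> 0) at_top"
proof (rule tendsto_at_top_realI)
  fix e :: real assume e: "e > 0"
  obtain K where K: "\<forall>s\<ge>0. \<forall>t\<ge>0. \<bar>W t - W s\<bar> \<le> K * \<bar>t - s\<bar>"
    using lip unfolding lipschitz_halfline_def by auto
  define K' where "K' = max K 1"
  have K'1: "K' \<ge> 1" unfolding K'_def by auto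
  define d where "d = e / (2 * K')"
  have d: "d > 0" unfolding d_def using e K'1 by auto
  have Kd: "K' * d = e / 2" unfolding d_def using K'1 by auto
  define I where "I = Inf (V ` {0..})"
  have I_le: "I \<le> V t" if "t \<ge> 0" for t
    unfolding I_def by (rule cInf_lower) (use V_nonneg that in \<open>auto intro: bdd_belowI[of _ 0]\<close>)
  have "\<exists>v\<in>V ` {0..}. v < I + d * e / 2" unfolding I_def by (rule cInf_lessD) (use d e in auto)
  then obtain t0 where t0: "t0 \<ge> 0" "V t0 < I + d * e / 2" by auto
  \<comment> \<open>past t0, V can drop by less than d e / 2, while W \<ge> e at some time forces a drop of d e / 2
      on the following window of length d\<close>
  have "\<bar>W t - 0\<bar> < e" if tt: "t \<ge> t0" for t
  proof (rule ccontr)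
    assume "\<not> \<bar>W t - 0\<bar> < e"
    then have We: "W t \<ge> e" using W_nonneg tt t0 by auto
    have "\<forall>x\<in>{t..t+d}. V' x \<le> - (e/2)"
    proof
      fix x assume x: "x \<in> {t..t+d}"
      have "\<bar>W x - W t\<bar> \<le> K * \<bar>x - t\<bar>" using K[rule_format, of t x] x tt t0 by auto
      also have "\<dots> \<le> K' * \<bar>x - t\<bar>" unfolding K'_def by (simp add: mult_right_mono)
      also have "\<dots> \<le> K' * d" using x K'1 by (intro mult_left_mono) auto
      finally have "W x \<ge> e / 2" using We Kd by linarith
      moreover have "V' x \<le> - W x" using V'_le x tt t0 by auto
      ultimately show "V' x \<le> - (e/2)" by linarith
    qed
    from increment_le_if_deriv_le[OF dV _ _ this] d tt t0 have "V (t + d) - V t \<le> - (e/2) * d" by auto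
    moreover have "V t \<le> V t0" using antimono_if_deriv_nonpos[OF dV _ t0(1) tt] V'_le W_nonneg by force
    moreover have "I \<le> V (t + d)" using I_le tt t0 d by auto
    ultimately show False using t0 by (simp add: algebra_simps)
  qed
  then show "\<exists>T. \<forall>t\<ge>T. \<bar>W t - 0\<bar> < e" by blast
qed

definition slowly_varying :: "(real \<Rightarrow> real) \<Rightarrow> bool" where
  "slowly_varying y \<longleftrightarrow> (\<forall>\<delta>>0. ((\<lambda>t. y (t + \<delta>) - y t) \<longlongrightarrow> 0) at_top)"

lemma slowly_varying_if_convergent:
  assumes "(y \<longlongrightarrow> l) at_top"
  shows "slowly_varying y"
  unfolding slowly_varying_def
proof (intro allI impI)
  fix \<delta> :: real assume "\<delta> > 0"
  have "filterlim (\<lambda>t. t + \<delta>) at_top at_top"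
    using filterlim_tendsto_add_at_top[OF tendsto_const filterlim_ident, of \<delta>] by (simp add: add.commute)
  from filterlim_compose[OF assms this] have "((\<lambda>t. y (t + \<delta>)) \<longlongrightarrow> l) at_top" .
  from tendsto_diff[OF this assms] show "((\<lambda>t. y (t + \<delta>) - y t) \<longlongrightarrow> 0) at_top" by simp
qed

lemma slowly_varying_if_deriv_tendsto_zero:
  assumes dy: "has_deriv_on_halfline y y'" and y'_lim: "(y' \<longlongrightarrow> 0) at_top"
  shows "slowly_varying y"
  unfolding slowly_varying_def
proof (intro allI impI tendsto_at_top_realI)
  fix d e :: real assume d: "d > 0" and e: "e > 0"
  obtain T where T: "\<forall>t\<ge>T. \<bar>y' t - 0\<bar> < e / (2 * d)"
    using tendsto_at_top_realD[OF y'_lim, of "e/(2*d)"] e d by auto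
  have "\<bar>y (t + d) - y t - 0\<bar> < e" if t: "t \<ge> max T 0" for t
  proof -
    have "\<bar>y (t + d) - y t\<bar> \<le> e / (2 * d) * (t + d - t)"
      by (rule abs_increment_le_if_abs_deriv_le[OF dy]) (use t T d in \<open>auto intro: less_imp_le\<close>)
    also have "\<dots> = e / 2" using d by simp
    finally show ?thesis using e by simp
  qed
  then show "\<exists>T. \<forall>t\<ge>T. \<bar>y (t + d) - y t - 0\<bar> < e" by blast
qed

lemma slowly_varying_add:
  "slowly_varying y \<Longrightarrow> slowly_varying z \<Longrightarrow> slowly_varying (\<lambda>t. y t + z t)"
  unfolding slowly_varying_def
proof (intro allI impI)
  fix d :: real assume "\<forall>d>0. ((\<lambda>t. y (t + d) - y t) \<longlongrightarrow> 0) at_top"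
    "\<forall>d>0. ((\<lambda>t. z (t + d) - z t) \<longlongrightarrow> 0) at_top" "d > 0"
  then have "((\<lambda>t. (y (t + d) - y t) + (z (t + d) - z t)) \<longlongrightarrow> 0 + 0) at_top"
    by (intro tendsto_add) auto
  then show "((\<lambda>t. y (t + d) + z (t + d) - (y t + z t)) \<longlongrightarrow> 0) at_top" by (simp add: algebra_simps)
qed

text \<open>The increments of a continuous strictly increasing F over steps of length e are bounded
  below on a compact set; this converts small increments of F \<circ> y into small increments of y.\<close>

lemma slowly_varying_strict_mono_cancel:
  assumes sm: "strict_mono F" and cont: "\<forall>x. isCont F x" and bdd: "bdd_halfline y"
    and sv: "slowly_varying (\<lambda>t. F (y t))"
  shows "slowly_varying y"
  unfolding slowly_varying_def
proof (intro allI impI tendsto_at_top_realI)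
  fix d e :: real assume d: "d > 0" and e: "e > 0"
  obtain M where M: "\<forall>t\<ge>0. \<bar>y t\<bar> \<le> M" using bdd unfolding bdd_halfline_def by auto
  have "isCont (\<lambda>x. F (x + e)) x" for x
    by (rule isCont_o2[where f="\<lambda>x. x + e"]) (use cont in \<open>auto intro: continuous_intros\<close>)
  then have "continuous_on {-M..M} (\<lambda>x. F (x + e) - F x)"
    using cont by (intro continuous_at_imp_continuous_on ballI continuous_intros) auto
  moreover have "{-M..M} \<noteq> {}" using M[rule_format, of 0] by auto
  ultimately obtain x0 where x0: "\<forall>x\<in>{-M..M}. F (x0 + e) - F x0 \<le> F (x + e) - F x"
    using continuous_attains_inf[of "{-M..M}"] by auto
  define \<eta> where "\<eta> = F (x0 + e) - F x0"
  have "\<eta> > 0" unfolding \<eta>_def using sm e by (simp add: strict_mono_less)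
  moreover have "((\<lambda>t. F (y (t + d)) - F (y t)) \<longlongrightarrow> 0) at_top"
    using sv d unfolding slowly_varying_def by auto
  ultimately obtain T where T: "\<forall>t\<ge>T. \<bar>F (y (t + d)) - F (y t) - 0\<bar> < \<eta>"
    using tendsto_at_top_realD by blast
  have "\<bar>y (t + d) - y t - 0\<bar> < e" if t: "t \<ge> max T 0" for t
  proof (rule ccontr)
    have y: "y t \<in> {-M..M}" "y (t + d) \<in> {-M..M}"
      using M[rule_format, of t] M[rule_format, of "t + d"] t d by (auto simp: abs_le_iff)
    have F: "\<bar>F (y (t + d)) - F (y t)\<bar> < \<eta>" using T t by auto
    assume "\<not> \<bar>y (t + d) - y t - 0\<bar> < e"
    then consider "y (t + d) \<ge> y t + e" | "y t \<ge> y (t + d) + e" by linarith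
    then show False
    proof cases
      case 1
      then have "F (y (t + d)) \<ge> F (y t + e)" using sm by (simp add: strict_mono_less_eq)
      moreover have "\<eta> \<le> F (y t + e) - F (y t)" using x0 y unfolding \<eta>_def by auto
      ultimately show False using F by linarith
    next
      case 2
      then have "F (y t) \<ge> F (y (t + d) + e)" using sm by (simp add: strict_mono_less_eq)
      moreover have "\<eta> \<le> F (y (t + d) + e) - F (y (t + d))" using x0 y unfolding \<eta>_def by auto
      ultimately show False using F by linarith
    qed
  qed
  then show "\<exists>T. \<forall>t\<ge>T. \<bar>y (t + d) - y t - 0\<bar> < e" by blast
qed

lemma barbalat_slowly_varying:
  assumes ds: "has_deriv_on_halfline s s'" and s'_eq: "\<forall>t\<ge>0. s' t = a t + b t"
    and lip: "lipschitz_halfline a" and b_lim: "(b \<longlongrightarrow> 0) at_top" and sv: "slowly_varying s"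
  shows "(a \<longlongrightarrow> 0) at_top"
proof (rule tendsto_at_top_realI)
  fix e :: real assume e: "e > 0"
  obtain K where K: "\<forall>s\<ge>0. \<forall>t\<ge>0. \<bar>a t - a s\<bar> \<le> K * \<bar>t - s\<bar>"
    using lip unfolding lipschitz_halfline_def by auto
  define K' where "K' = max K 1"
  have K'1: "K' \<ge> 1" unfolding K'_def by auto
  define d where "d = e / (2 * K')"
  have d: "d > 0" unfolding d_def using e K'1 by auto
  have Kd: "K' * d = e / 2" unfolding d_def using K'1 by auto
  obtain T1 where T1: "\<forall>t\<ge>T1. \<bar>b t - 0\<bar> < e/4" using tendsto_at_top_realD[OF b_lim, of "e/4"] e by auto
  have "((\<lambda>t. s (t + d) - s t) \<longlongrightarrow> 0) at_top" using sv d unfolding slowly_varying_def by auto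
  from tendsto_at_top_realD[OF this, of "d * e / 4"]
  obtain T2 where T2: "\<forall>t\<ge>T2. \<bar>s (t + d) - s t - 0\<bar> < d * e / 4" using d e by auto
  \<comment> \<open>if |a t| \<ge> e, then on [t, t + d] the derivative of s keeps the sign of a t and has size
      at least e/4, so s moves by at least d e / 4\<close>
  have "\<bar>a t - 0\<bar> < e" if tt: "t \<ge> max (max T1 T2) 0" for t
  proof (rule ccontr)
    have t0: "t \<ge> 0" using tt by auto
    have near: "\<bar>a x - a t\<bar> \<le> e / 2" if x: "x \<in> {t..t+d}" for x
    proof -
      have "\<bar>a x - a t\<bar> \<le> K * \<bar>x - t\<bar>" using K[rule_format, of t x] x t0 by auto
      also have "\<dots> \<le> K' * \<bar>x - t\<bar>" unfolding K'_def by (simp add: mult_right_mono)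
      also have "\<dots> \<le> K' * d" using x K'1 by (intro mult_left_mono) auto
      finally show ?thesis using Kd by linarith
    qed
    have b_small: "\<bar>b x\<bar> < e / 4" if x: "x \<in> {t..t+d}" for x using T1 x tt by auto
    have s_incr: "\<bar>s (t + d) - s t\<bar> < d * e / 4" using T2 tt by auto
    assume "\<not> \<bar>a t - 0\<bar> < e"
    then consider "a t \<ge> e" | "a t \<le> -e" by linarith
    then show False
    proof cases
      case 1
      have "\<forall>x\<in>{t..t+d}. s' x \<ge> e / 4"
      proof
        fix x assume x: "x \<in> {t..t+d}"
        have "a x \<ge> e / 2" using near[OF x] 1 by linarith
        then show "s' x \<ge> e / 4" using s'_eq b_small[OF x] x t0 by force
      qed
      from increment_ge_if_deriv_ge[OF ds t0 _ this] d have "s (t + d) - s t \<ge> e / 4 * d" by auto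
      moreover have "e / 4 * d = d * e / 4" by simp
      ultimately show False using s_incr by linarith
    next
      case 2
      have "\<forall>x\<in>{t..t+d}. s' x \<le> - (e / 4)"
      proof
        fix x assume x: "x \<in> {t..t+d}"
        have "a x \<le> - (e / 2)" using near[OF x] 2 by linarith
        then show "s' x \<le> - (e / 4)" using s'_eq b_small[OF x] x t0 by force
      qed
      from increment_le_if_deriv_le[OF ds t0 _ this] d have "s (t + d) - s t \<le> - (e / 4) * d" by auto
      moreover have "- (e / 4) * d = - (d * e / 4)" by simp
      ultimately show False using s_incr by linarith
    qed
  qed
  then show "\<exists>T. \<forall>t\<ge>T. \<bar>a t - 0\<bar> < e" by blast
qed

section \<open>Bregman potentials of increasing functions\<close>

definition bregman :: "(real \<Rightarrow> real) \<Rightarrow> real \<Rightarrow> real \<Rightarrow> real" where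
  "bregman F c = (SOME G. G c = 0 \<and> (\<forall>x. (G has_real_derivative F x - F c) (at x)))"

lemma exists_centred_antiderivative:
  fixes F :: "real \<Rightarrow> real"
  assumes "\<forall>x. isCont F x"
  shows "\<exists>G. G c = 0 \<and> (\<forall>x. (G has_real_derivative F x - F c) (at x))"
proof -
  have "\<exists>H. \<forall>x :: real. -\<infinity> < ereal x \<longrightarrow> ereal x < \<infinity> \<longrightarrow> (H has_vector_derivative F x) (at x)"
    by (rule einterval_antiderivative) (use assms in auto)
  then obtain H where H: "\<forall>x. (H has_real_derivative F x) (at x)"
    by (auto simp: has_real_derivative_iff_has_vector_derivative)
  define G where "G x = H x - H c - F c * (x - c)" for x
  have "(G has_real_derivative F x - F c) (at x)" for x
    unfolding G_def using H by (auto intro!: derivative_eq_intros)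
  moreover have "G c = 0" unfolding G_def by simp
  ultimately show ?thesis by blast
qed

locale cont_strict_mono =
  fixes F :: "real \<Rightarrow> real"
  assumes strict_mono: "strict_mono F" and cont: "\<forall>x. isCont F x"
begin

lemma bregman_self: "bregman F c c = 0"
  and has_real_derivative_bregman: "(bregman F c has_real_derivative F x - F c) (at x)"
  using someI_ex[OF exists_centred_antiderivative[OF cont, of c]] unfolding bregman_def by auto

lemma isCont_bregman: "isCont (bregman F c) x"
  using has_real_derivative_bregman DERIV_isCont by blast

lemma bregman_mono:
  assumes "c \<le> y" "y \<le> x"
  shows "bregman F c y \<le> bregman F c x"
proof (rule DERIV_nonneg_imp_nondecreasing[OF assms(2)])
  fix z assume "y \<le> z"
  then show "\<exists>D. (bregman F c has_real_derivative D) (at z) \<and> 0 \<le> D"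
    using has_real_derivative_bregman[of c z] strict_mono assms(1)
    by (intro exI[of _ "F z - F c"]) (simp add: strict_mono_less_eq)
qed

lemma bregman_antimono:
  assumes "x \<le> y" "y \<le> c"
  shows "bregman F c y \<le> bregman F c x"
proof (rule DERIV_nonpos_imp_nonincreasing[OF assms(1)])
  fix z assume "z \<le> y"
  then show "\<exists>D. (bregman F c has_real_derivative D) (at z) \<and> D \<le> 0"
    using has_real_derivative_bregman[of c z] strict_mono assms(2)
    by (intro exI[of _ "F z - F c"]) (simp add: strict_mono_less_eq)
qed

lemma bregman_nonneg: "bregman F c x \<ge> 0"
  using bregman_mono[of c c x] bregman_antimono[of x c c] bregman_self[of c] by (cases "c \<le> x") auto

lemma bregman_pos: "x \<noteq> c \<Longrightarrow> bregman F c x > 0"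
proof (cases x c rule: linorder_cases)
  case less
  obtain z where z: "x < z" "z < c" "bregman F c c - bregman F c x = (c - x) * (F z - F c)"
    using MVT2[OF less, of "bregman F c" "\<lambda>z. F z - F c"] has_real_derivative_bregman by auto
  have "F z - F c < 0" using z strict_mono by (simp add: strict_mono_less)
  then have "(c - x) * (F z - F c) < 0" using less by (simp add: mult_pos_neg)
  then show ?thesis using z bregman_self by simp
next
  case greater
  obtain z where z: "c < z" "z < x" "bregman F c x - bregman F c c = (x - c) * (F z - F c)"
    using MVT2[OF greater, of "bregman F c" "\<lambda>z. F z - F c"] has_real_derivative_bregman by auto
  have "F z - F c > 0" using z strict_mono by (simp add: strict_mono_less)
  then show ?thesis using z greater bregman_self by simp
qed simp

lemma bregman_ge_if_far:
  assumes "e > 0"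
  shows "\<exists>\<eta>>0. \<forall>x. \<bar>x - c\<bar> \<ge> e \<longrightarrow> bregman F c x \<ge> \<eta>"
proof (intro exI[of _ "min (bregman F c (c + e)) (bregman F c (c - e))"] conjI allI impI)
  show "min (bregman F c (c + e)) (bregman F c (c - e)) > 0"
    using bregman_pos[of "c + e"] bregman_pos[of "c - e"] assms by simp
  fix x assume "\<bar>x - c\<bar> \<ge> e"
  then consider "x \<ge> c + e" | "x \<le> c - e" by linarith
  then show "bregman F c x \<ge> min (bregman F c (c + e)) (bregman F c (c - e))"
    by cases (use bregman_mono[of c "c + e" x] bregman_antimono[of x "c - e" c] assms in auto)
qed

lemma bregman_sublevel_bounded: "\<exists>R. \<forall>x. bregman F c x \<le> M \<longrightarrow> \<bar>x\<bar> \<le> R"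
proof -
  define a where "a = min (F (c + 1) - F c) (F c - F (c - 1))"
  have a: "a > 0" unfolding a_def using strict_mono by (simp add: strict_mono_less)
  define R where "R = \<bar>c\<bar> + 1 + max M 0 / a"
  have "\<bar>x\<bar> \<le> R" if Gx: "bregman F c x \<le> M" for x
  proof -
    have "x \<le> c + 1 + max M 0 / a"
    proof (rule ccontr)
      assume far: "\<not> ?thesis"
      then have x1: "x > c + 1" using a by (smt (verit) divide_nonneg_pos max.cobounded2)
      obtain z where z: "c + 1 < z" "z < x"
        "bregman F c x - bregman F c (c + 1) = (x - (c + 1)) * (F z - F c)"
        using MVT2[OF x1, of "bregman F c" "\<lambda>z. F z - F c"] has_real_derivative_bregman by auto
      have "F z - F c \<ge> a" unfolding a_def using z strict_mono by (smt (verit) strict_mono_less)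
      then have "(x - (c + 1)) * (F z - F c) \<ge> (x - (c + 1)) * a" using x1 by (simp add: mult_left_mono)
      moreover have "(x - (c + 1)) * a > max M 0" using far a by (simp add: field_simps)
      ultimately show False using z bregman_nonneg[of c "c + 1"] Gx by linarith
    qed
    moreover have "x \<ge> c - 1 - max M 0 / a"
    proof (rule ccontr)
      assume far: "\<not> ?thesis"
      then have x1: "x < c - 1" using a by (smt (verit) divide_nonneg_pos max.cobounded2)
      obtain z where z: "x < z" "z < c - 1"
        "bregman F c (c - 1) - bregman F c x = (c - 1 - x) * (F z - F c)"
        using MVT2[OF x1, of "bregman F c" "\<lambda>z. F z - F c"] has_real_derivative_bregman by auto
      have "F c - F z \<ge> a" unfolding a_def using z strict_mono by (smt (verit) strict_mono_less)
      then have "(c - 1 - x) * (F c - F z) \<ge> (c - 1 - x) * a" using x1 by (simp add: mult_left_mono)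
      moreover have "(c - 1 - x) * a > max M 0" using far a by (simp add: field_simps)
      moreover have "(c - 1 - x) * (F z - F c) = - ((c - 1 - x) * (F c - F z))" by (simp add: algebra_simps)
      ultimately show False using z bregman_nonneg[of c "c - 1"] Gx by linarith
    qed
    ultimately show ?thesis unfolding R_def by (smt (verit) a divide_nonneg_pos max.cobounded2)
  qed
  then show ?thesis by blast
qed

lemma tendsto_if_bregman_tendsto_zero:
  fixes y :: "real \<Rightarrow> real"
  assumes "((\<lambda>t. bregman F c (y t)) \<longlongrightarrow> 0) at_top"
  shows "(y \<longlongrightarrow> c) at_top"
proof (rule tendsto_at_top_realI)
  fix e :: real assume "e > 0"
  then obtain \<eta> where \<eta>: "\<eta> > 0" "\<forall>x. \<bar>x - c\<bar> \<ge> e \<longrightarrow> bregman F c x \<ge> \<eta>"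
    using bregman_ge_if_far[of e c] by auto
  obtain T where T: "\<forall>t\<ge>T. \<bar>bregman F c (y t) - 0\<bar> < \<eta>"
    using tendsto_at_top_realD[OF assms \<eta>(1)] by auto
  have "\<bar>y t - c\<bar> < e" if "t \<ge> T" for t
    using T \<eta>(2) that by (metis abs_less_iff not_le diff_zero)
  then show "\<exists>T. \<forall>t\<ge>T. \<bar>y t - c\<bar> < e" by blast
qed

lemma has_deriv_on_halfline_scaled_bregman:
  assumes "has_deriv_on_halfline y (\<lambda>t. D t / w)" "w \<noteq> 0"
  shows "has_deriv_on_halfline (\<lambda>t. w * bregman F c (y t)) (\<lambda>t. (F (y t) - F c) * D t)"
  unfolding has_deriv_on_halfline_def
proof (intro allI impI)
  fix t :: real assume "t \<ge> 0"
  then have "((\<lambda>s. bregman F c (y s)) has_real_derivative (F (y t) - F c) * (D t / w)) (at t within {0..})"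
    using assms(1) DERIV_chain2[OF has_real_derivative_bregman]
    unfolding has_deriv_on_halfline_def by blast
  from DERIV_cmult[OF this, of w]
  show "((\<lambda>s. w * bregman F c (y s)) has_real_derivative (F (y t) - F c) * D t) (at t within {0..})"
    using assms(2) by simp
qed

end

lemma C1_strict_incr_strict_mono: "C1_strict_incr F \<Longrightarrow> strict_mono F"
  unfolding C1_strict_incr_def by blast

lemma C1_strict_incr_isCont: "C1_strict_incr F \<Longrightarrow> \<forall>x. isCont F x"
  unfolding C1_strict_incr_def using DERIV_isCont by blast

lemma C1_strict_incr_cont_strict_mono: "C1_strict_incr F \<Longrightarrow> cont_strict_mono F"
  unfolding cont_strict_mono_def using C1_strict_incr_strict_mono C1_strict_incr_isCont by blast

section \<open>Incidence matrices and Laplacians\<close>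

lemma incidence_mult_col:
  assumes "graph_ok n m epos eneg" "k < m"
  shows "(\<Sum>i<n. incidence epos eneg i k * v i) = v (epos k) - v (eneg k)"
proof -
  have k: "epos k < n" "eneg k < n" "epos k \<noteq> eneg k" using assms unfolding graph_ok_def by auto
  have "(\<Sum>i<n. incidence epos eneg i k * v i) =
        (\<Sum>i<n. (if i = epos k then v i else 0) + (if i = eneg k then - v i else 0))"
    by (rule sum.cong) (use k in \<open>auto simp: incidence_def\<close>)
  also have "\<dots> = v (epos k) - v (eneg k)" using k by (simp add: sum.distrib)
  finally show ?thesis .
qed

lemma incidence_sum_mult:
  assumes "graph_ok n m epos eneg"
  shows "(\<Sum>i<n. \<Sum>k<m. incidence epos eneg i k * w k) = 0"
proof -
  have "(\<Sum>i<n. \<Sum>k<m. incidence epos eneg i k * w k) = (\<Sum>k<m. (\<Sum>i<n. incidence epos eneg i k) * w k)"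
    by (subst sum.swap) (simp add: sum_distrib_right)
  also have "\<dots> = 0" using incidence_mult_col[OF assms, of _ "\<lambda>_. 1"] by simp
  finally show ?thesis .
qed

lemma connected_tendsto_consensus:
  fixes v :: "'b \<Rightarrow> nat \<Rightarrow> real"
  assumes "graph_connected n m epos eneg"
    and "\<forall>k<m. ((\<lambda>t. v t (epos k) - v t (eneg k)) \<longlongrightarrow> 0) F" "i < n" "j < n"
  shows "((\<lambda>t. v t i - v t j) \<longlongrightarrow> 0) F"
proof -
  have "(und_adj m epos eneg)\<^sup>*\<^sup>* i j" using assms unfolding graph_connected_def by auto
  then show ?thesis
  proof (induction rule: rtranclp_induct)
    case base then show ?case by simp
  next
    case (step y z)
    obtain k where k: "k < m" "(epos k = y \<and> eneg k = z) \<or> (epos k = z \<and> eneg k = y)"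
      using step(2) unfolding und_adj_def by auto
    have "((\<lambda>t. v t y - v t z) \<longlongrightarrow> 0) F"
    proof (cases "epos k = y \<and> eneg k = z")
      case True then show ?thesis using assms(2) k by auto
    next
      case False
      then have "((\<lambda>t. - (v t z - v t y)) \<longlongrightarrow> - 0) F" using assms(2) k by (intro tendsto_minus) auto
      then show ?thesis by simp
    qed
    from tendsto_add[OF step(3) this] show ?case by simp
  qed
qed

lemma connected_consensus:
  assumes "graph_connected n m epos eneg" "\<forall>k<m. w (epos k) = w (eneg k)" "i < n" "j < n"
  shows "w i = (w j :: real)"
proof -
  have "((\<lambda>t::real. w i - w j) \<longlongrightarrow> 0) at_top"
    using connected_tendsto_consensus[OF assms(1) _ assms(3,4), of "\<lambda>t. w" at_top] assms(2) by auto
  then show ?thesis by (simp add: tendsto_const_iff)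
qed

lemma strongly_connected_tendsto_consensus:
  fixes v :: "'b \<Rightarrow> nat \<Rightarrow> real"
  assumes "strongly_connected p a"
    and "\<forall>i<p. \<forall>j<p. a i j > 0 \<longrightarrow> ((\<lambda>t. v t i - v t j) \<longlongrightarrow> 0) F" "i < p" "j < p"
  shows "((\<lambda>t. v t i - v t j) \<longlongrightarrow> 0) F"
proof -
  have "(\<lambda>u v. u < p \<and> v < p \<and> a u v > 0)\<^sup>*\<^sup>* i j"
    using assms unfolding strongly_connected_def by auto
  then show ?thesis
  proof (induction rule: rtranclp_induct)
    case base then show ?case by simp
  next
    case (step y z)
    then have "((\<lambda>t. v t y - v t z) \<longlongrightarrow> 0) F" using assms(2) by auto
    from tendsto_add[OF step(3) this] show ?case by simp
  qed
qed

lemma strongly_connected_consensus: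
  assumes "strongly_connected p a" "\<forall>i<p. \<forall>j<p. a i j > 0 \<longrightarrow> w i = w j" "i < p" "j < p"
  shows "w i = (w j :: real)"
proof -
  have "((\<lambda>t::real. w i - w j) \<longlongrightarrow> 0) at_top"
    using strongly_connected_tendsto_consensus[OF assms(1) _ assms(3,4), of "\<lambda>t. w" at_top] assms(2)
    by auto
  then show ?thesis by (simp add: tendsto_const_iff)
qed

lemma laplacian_mult_row:
  assumes "i < p"
  shows "(\<Sum>j<p. laplacian p a i j * z j) = (\<Sum>j<p. a i j * (z i - z j))"
proof -
  have "laplacian p a i j * z j = (if i = j then (\<Sum>l<p. a i l) * z i else 0) - a i j * z j" for j
    unfolding laplacian_def by (auto simp: algebra_simps)
  then have "(\<Sum>j<p. laplacian p a i j * z j) =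
        (\<Sum>j<p. (if i = j then (\<Sum>l<p. a i l) * z i else 0)) - (\<Sum>j<p. a i j * z j)"
    by (simp add: sum_subtractf)
  also have "\<dots> = (\<Sum>l<p. a i l) * z i - (\<Sum>j<p. a i j * z j)" using assms by simp
  also have "\<dots> = (\<Sum>j<p. a i j * (z i - z j))"
    by (simp add: sum_distrib_right sum_subtractf right_diff_distrib)
  finally show ?thesis .
qed

lemma laplacian_row_sum: "i < p \<Longrightarrow> (\<Sum>j<p. laplacian p a i j) = 0"
  using laplacian_mult_row[of i p a "\<lambda>_. 1"] by simp

lemma laplacian_col_sum:
  assumes "balanced p a" "j < p"
  shows "(\<Sum>i<p. laplacian p a i j) = 0"
proof -
  have "(\<Sum>i<p. laplacian p a i j) = (\<Sum>i<p. if i = j then (\<Sum>l<p. a i l) else 0) - (\<Sum>i<p. a i j)"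
    unfolding laplacian_def by (simp add: sum_subtractf)
  also have "\<dots> = (\<Sum>l<p. a j l) - (\<Sum>i<p. a i j)" using assms(2) by simp
  finally show ?thesis using assms unfolding balanced_def by auto
qed

text \<open>Balance makes the quadratic form of the (nonsymmetric) Laplacian that of its symmetric part.\<close>

lemma laplacian_quadratic_form:
  assumes "balanced p a"
  shows "(\<Sum>i<p. z i * (\<Sum>j<p. laplacian p a i j * z j)) =
         (\<Sum>i<p. \<Sum>j<p. a i j * (z i - z j)^2) / 2"
proof -
  have "(\<Sum>i<p. z i * (\<Sum>j<p. laplacian p a i j * z j)) = (\<Sum>i<p. \<Sum>j<p. a i j * (z i * z i - z i * z j))"
  proof (rule sum.cong)
    fix i assume "i \<in> {..<p}"
    then have "(\<Sum>j<p. laplacian p a i j * z j) = (\<Sum>j<p. a i j * (z i - z j))"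
      by (simp add: laplacian_mult_row)
    then show "z i * (\<Sum>j<p. laplacian p a i j * z j) = (\<Sum>j<p. a i j * (z i * z i - z i * z j))"
      by (simp add: sum_distrib_left algebra_simps)
  qed simp
  also have "\<dots> = (\<Sum>i<p. \<Sum>j<p. a i j * z i * z i) - (\<Sum>i<p. \<Sum>j<p. a i j * z i * z j)"
    by (simp add: sum_subtractf algebra_simps)
  finally have "(\<Sum>i<p. z i * (\<Sum>j<p. laplacian p a i j * z j)) =
        (\<Sum>i<p. \<Sum>j<p. a i j * z i * z i) - (\<Sum>i<p. \<Sum>j<p. a i j * z i * z j)" .
  moreover have "(\<Sum>i<p. \<Sum>j<p. a i j * z j * z j) = (\<Sum>i<p. \<Sum>j<p. a i j * z i * z i)"
  proof -
    have "(\<Sum>i<p. \<Sum>j<p. a i j * z j * z j) = (\<Sum>j<p. (\<Sum>i<p. a i j) * z j * z j)"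
      by (subst sum.swap) (simp add: sum_distrib_right)
    also have "\<dots> = (\<Sum>j<p. (\<Sum>i<p. a j i) * z j * z j)"
      using assms unfolding balanced_def by (intro sum.cong) auto
    also have "\<dots> = (\<Sum>i<p. \<Sum>j<p. a i j * z i * z i)" by (simp add: sum_distrib_right)
    finally show ?thesis .
  qed
  moreover have "(\<Sum>i<p. \<Sum>j<p. a i j * (z i - z j)^2) = (\<Sum>i<p. \<Sum>j<p. a i j * z i * z i)
      + (\<Sum>i<p. \<Sum>j<p. a i j * z j * z j) - 2 * (\<Sum>i<p. \<Sum>j<p. a i j * z i * z j)"
    by (simp add: power2_eq_square algebra_simps sum.distrib sum_subtractf sum_distrib_left)
  ultimately show ?thesis by simp
qed

lemma laplacian_energy_nonneg:
  "weighted_digraph p a \<Longrightarrow> (\<Sum>i<p. \<Sum>j<p. a i j * (z i - z j)^2) \<ge> 0"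
  unfolding weighted_digraph_def by (auto intro!: sum_nonneg)

lemma laplacian_kernel_const:
  assumes "weighted_digraph p a" "balanced p a" "strongly_connected p a"
    and L0: "\<forall>i<p. (\<Sum>j<p. laplacian p a i j * w j) = 0" and "i < p" "j < p"
  shows "w i = w j"
proof -
  define E where "E i j = a i j * (w i - w j)^2" for i j
  have E_nonneg: "E i j \<ge> 0" if "i < p" "j < p" for i j
    using assms(1) that unfolding weighted_digraph_def E_def by auto
  have "(\<Sum>i<p. \<Sum>j<p. E i j) = 0"
    using laplacian_quadratic_form[OF assms(2), of w] L0 unfolding E_def by simp
  moreover have "\<forall>i\<in>{..<p}. 0 \<le> (\<Sum>j<p. E i j)" using E_nonneg by (auto intro: sum_nonneg)
  ultimately have row0: "\<forall>i\<in>{..<p}. (\<Sum>j<p. E i j) = 0"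
    using sum_nonneg_eq_0_iff[of "{..<p}" "\<lambda>i. \<Sum>j<p. E i j"] by simp
  have "E i j = 0" if "i < p" "j < p" for i j
  proof -
    have "\<forall>j\<in>{..<p}. 0 \<le> E i j" using E_nonneg that by simp
    then show ?thesis using row0 that sum_nonneg_eq_0_iff[of "{..<p}" "E i"] by simp
  qed
  then have "\<forall>i<p. \<forall>j<p. a i j > 0 \<longrightarrow> w i = w j" unfolding E_def by fastforce
  then show ?thesis using strongly_connected_consensus[OF assms(3)] assms(5,6) by blast
qed

lemma sum_Emul:
  assumes "p \<le> n"
  shows "(\<Sum>i<n. Emul p u i) = (\<Sum>i<p. u i)"
proof -
  have "(\<Sum>i<n. Emul p u i) = (\<Sum>i\<in>{..<n} \<inter> {i. i < p}. u i)"
    unfolding Emul_def by (simp add: sum.inter_restrict)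
  also have "{..<n} \<inter> {i. i < p} = {..<p}" using assms by auto
  finally show ?thesis .
qed

lemma sum_mult_Emul:
  assumes "p \<le> n"
  shows "(\<Sum>i<n. v i * Emul p u i) = (\<Sum>i<p. v i * u i)"
proof -
  have "(\<Sum>i<n. v i * Emul p u i) = (\<Sum>i<n. Emul p (\<lambda>i. v i * u i) i)"
    by (rule sum.cong) (auto simp: Emul_def)
  then show ?thesis by (simp add: sum_Emul[OF assms])
qed

section \<open>The closed loop and its equilibria\<close>

locale closed_loop =
  fixes n m p :: nat
    and epos eneg :: "nat \<Rightarrow> nat"
    and tx tmu txi tth tph q r d ybar :: "nat \<Rightarrow> real"
    and h f g :: "nat \<Rightarrow> real \<Rightarrow> real"
    and a :: "nat \<Rightarrow> nat \<Rightarrow> real"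
    and xb mub xib thb phb :: "nat \<Rightarrow> real"
    and x \<mu> \<xi> \<theta> \<phi> :: "real \<Rightarrow> nat \<Rightarrow> real"
    and B L :: "nat \<Rightarrow> nat \<Rightarrow> real" and ub :: "nat \<Rightarrow> real"
  assumes B_def: "B = incidence epos eneg"
    and L_def: "L = laplacian p a"
    and ub_def: "ub = ubar n p q r d"
    and graph: "graph_ok n m epos eneg" and conn: "graph_connected n m epos eneg"
    and p_ge: "1 \<le> p" and p_le: "p \<le> n"
    and tx_pos: "\<forall>i<n. tx i > 0" and tmu_pos: "\<forall>k<m. tmu k > 0"
    and txi_pos: "\<forall>k<m. txi k > 0" and tth_pos: "\<forall>i<p. tth i > 0"
    and tph_pos: "\<forall>i<p. tph i > 0"
    and h_C1: "\<forall>i<n. C1_strict_incr (h i)"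
    and q_pos: "\<forall>i<p. q i > 0"
    and digraph: "weighted_digraph p a" and bal: "balanced p a"
    and sconn: "strongly_connected p a"
    and f_C1: "\<forall>k<m. C1_strict_incr (f k)"
    and g_C1: "\<forall>i<p. C1_strict_incr (g i)"
    and equil: "(\<forall>i<n. rhs_x m p B f g d mub thb i = 0) \<and>
                (\<forall>k<m. rhs_mu n B h f ybar xb mub xib k = 0) \<and>
                (\<forall>k<m. rhs_xi f mub xib k = 0) \<and>
                (\<forall>i<p. rhs_theta h g ybar xb thb phb i = 0) \<and>
                (\<forall>i<p. rhs_phi p L q r g thb phb i = 0)"
    and sol: "\<forall>t\<ge>0.
        (\<forall>i<n. ((\<lambda>s. x s i) has_real_derivative
            rhs_x m p B f g d (\<mu> t) (\<theta> t) i / tx i) (at t within {0..})) \<and>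
        (\<forall>k<m. ((\<lambda>s. \<mu> s k) has_real_derivative
            rhs_mu n B h f ybar (x t) (\<mu> t) (\<xi> t) k / tmu k) (at t within {0..})) \<and>
        (\<forall>k<m. ((\<lambda>s. \<xi> s k) has_real_derivative
            rhs_xi f (\<mu> t) (\<xi> t) k / txi k) (at t within {0..})) \<and>
        (\<forall>i<p. ((\<lambda>s. \<theta> s i) has_real_derivative
            rhs_theta h g ybar (x t) (\<theta> t) (\<phi> t) i / tth i) (at t within {0..})) \<and>
        (\<forall>i<p. ((\<lambda>s. \<phi> s i) has_real_derivative
            rhs_phi p L q r g (\<theta> t) (\<phi> t) i / tph i) (at t within {0..}))"
begin

definition equilibrium ::
    "(nat \<Rightarrow> real) \<Rightarrow> (nat \<Rightarrow> real) \<Rightarrow> (nat \<Rightarrow> real) \<Rightarrow> (nat \<Rightarrow> real) \<Rightarrow> (nat \<Rightarrow> real) \<Rightarrow> bool" where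
  "equilibrium xs ms xis ths phs \<longleftrightarrow>
     (\<forall>i<n. rhs_x m p B f g d ms ths i = 0) \<and>
     (\<forall>k<m. rhs_mu n B h f ybar xs ms xis k = 0) \<and>
     (\<forall>k<m. rhs_xi f ms xis k = 0) \<and>
     (\<forall>i<p. rhs_theta h g ybar xs ths phs i = 0) \<and>
     (\<forall>i<p. rhs_phi p L q r g ths phs i = 0)"

lemma equilibrium_given: "equilibrium xb mub xib thb phb"
  using equil unfolding equilibrium_def by auto

lemma n_pos: "0 < n"
  using p_ge p_le by auto

lemma B_mult_col: "k < m \<Longrightarrow> (\<Sum>i<n. B i k * v i) = v (epos k) - v (eneg k)"
  unfolding B_def by (rule incidence_mult_col[OF graph])

lemma sum_rhs_x: "(\<Sum>i<n. rhs_x m p B f g d ms ths i) = (\<Sum>i<p. g i (ths i)) - (\<Sum>i<n. d i)"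
  using incidence_sum_mult[OF graph] sum_Emul[OF p_le]
  unfolding rhs_x_def B_def by (simp add: sum.distrib sum_subtractf)

lemma sum_inverse_q_pos: "(\<Sum>j<p. 1 / q j) > 0"
proof -
  have "(\<Sum>j<p. 1 / q j) \<ge> 1 / q 0"
    by (rule member_le_sum) (use p_ge q_pos in \<open>auto intro: less_imp_le\<close>)
  moreover have "1 / q 0 > 0" using q_pos p_ge by auto
  ultimately show ?thesis by linarith
qed

lemma L_row_sum: "i < p \<Longrightarrow> (\<Sum>j<p. L i j) = 0"
  unfolding L_def by (rule laplacian_row_sum)

lemma L_quadratic_form:
  "(\<Sum>i<p. z i * (\<Sum>j<p. L i j * z j)) = (\<Sum>i<p. \<Sum>j<p. a i j * (z i - z j)^2) / 2"
  unfolding L_def by (rule laplacian_quadratic_form[OF bal])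

lemma sum_L_mult: "(\<Sum>i<p. \<Sum>j<p. L i j * w j) = 0"
proof -
  have "(\<Sum>i<p. \<Sum>j<p. L i j * w j) = (\<Sum>j<p. (\<Sum>i<p. L i j) * w j)"
    by (subst sum.swap) (simp add: sum_distrib_right)
  also have "\<dots> = 0" unfolding L_def by (simp add: laplacian_col_sum[OF bal])
  finally show ?thesis .
qed

context
  fixes xs ms xis ths phs :: "nat \<Rightarrow> real"
  assumes eq: "equilibrium xs ms xis ths phs"
begin

lemma equilibrium_xi: "k < m \<Longrightarrow> xis k = f k (ms k)"
  using eq unfolding equilibrium_def rhs_xi_def by auto

lemma equilibrium_output_error_consensus:
  assumes "i < n"
  shows "h i (xs i) - ybar i = h 0 (xs 0) - ybar 0"
proof (rule connected_consensus[OF conn _ assms n_pos])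
  show "\<forall>k<m. h (epos k) (xs (epos k)) - ybar (epos k) = h (eneg k) (xs (eneg k)) - ybar (eneg k)"
  proof (intro allI impI)
    fix k assume k: "k < m"
    have "rhs_mu n B h f ybar xs ms xis k = 0" using eq k unfolding equilibrium_def by blast
    then have "(\<Sum>i<n. B i k * (h i (xs i) - ybar i)) = 0"
      using equilibrium_xi[OF k] unfolding rhs_mu_def by simp
    then show "h (epos k) (xs (epos k)) - ybar (epos k) = h (eneg k) (xs (eneg k)) - ybar (eneg k)"
      using B_mult_col[OF k] by simp
  qed
qed

lemma equilibrium_laplacian:
  assumes "i < p"
  shows "q i * (\<Sum>j<p. L i j * (q j * phs j + r j)) = - (h 0 (xs 0) - ybar 0)"
proof -
  have "rhs_theta h g ybar xs ths phs i = 0" "rhs_phi p L q r g ths phs i = 0"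
    using eq assms unfolding equilibrium_def by blast+
  then show ?thesis
    using equilibrium_output_error_consensus[of i] assms p_le
    unfolding rhs_theta_def rhs_phi_def by simp
qed

text \<open>Summing over i kills the Laplacian terms (the columns of L sum to 0 since the digraph is
  balanced), which forces the common output error to vanish.\<close>

lemma equilibrium_output_error_zero:
  assumes "i < n"
  shows "h i (xs i) = ybar i"
proof -
  define c where "c = h 0 (xs 0) - ybar 0"
  define S where "S i = (\<Sum>j<p. L i j * (q j * phs j + r j))" for i
  have "S i = - c * (1 / q i)" if "i < p" for i
  proof -
    have "q i > 0" using q_pos that by blast
    then show ?thesis using equilibrium_laplacian[OF that] unfolding S_def[symmetric] c_def
      by (simp add: eq_divide_eq mult.commute)
  qed
  then have "0 = - c * (\<Sum>i<p. 1 / q i)"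
    using sum_L_mult[of "\<lambda>j. q j * phs j + r j"] unfolding S_def by (simp add: sum_distrib_left)
  then have "c = 0" using sum_inverse_q_pos by simp
  then show ?thesis using equilibrium_output_error_consensus[OF assms] unfolding c_def by simp
qed

lemma equilibrium_laplacian_zero: "i < p \<Longrightarrow> (\<Sum>j<p. L i j * (q j * phs j + r j)) = 0"
  using equilibrium_laplacian[of i] equilibrium_output_error_zero[of 0] q_pos n_pos by force

lemma equilibrium_g_eq_phi: "i < p \<Longrightarrow> g i (ths i) = phs i"
  using eq equilibrium_output_error_zero[of i] p_le
  unfolding equilibrium_def rhs_theta_def by force

lemma equilibrium_phi: "i < p \<Longrightarrow> phs i = ub i"
proof -
  define W where "W j = q j * phs j + r j" for j
  have W_const: "W i = W 0" if "i < p" for i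
    by (rule laplacian_kernel_const[OF digraph bal sconn _ that])
       (use equilibrium_laplacian_zero p_ge in \<open>auto simp: L_def W_def\<close>)
  have phs: "phs i = (W 0 - r i) / q i" if "i < p" for i
  proof -
    have "q i > 0" using q_pos that by blast
    then show ?thesis using W_const[OF that] unfolding W_def by (simp add: field_simps)
  qed
  \<comment> \<open>sum of the x-equations: the columns of B sum to 0\<close>
  have "(\<Sum>i<p. g i (ths i)) = (\<Sum>i<n. d i)"
    using sum_rhs_x[of ms ths] eq unfolding equilibrium_def by simp
  moreover have "(\<Sum>i<p. g i (ths i)) = W 0 * (\<Sum>i<p. 1 / q i) - (\<Sum>i<p. r i / q i)"
    using equilibrium_g_eq_phi phs
    by (simp add: sum_distrib_left diff_divide_distrib sum_subtractf)
  moreover have "(\<Sum>l<n. d l + (if l < p then r l / q l else 0)) = (\<Sum>i<n. d i) + (\<Sum>i<p. r i / q i)"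
    using sum_Emul[OF p_le, of "\<lambda>l. r l / q l"] unfolding Emul_def by (simp add: sum.distrib)
  ultimately have "W 0 = kappa n p q r d i" for i
    unfolding kappa_def using sum_inverse_q_pos by (simp add: field_simps)
  then show "phs i = ub i" if "i < p" for i
    using phs[OF that] unfolding ub_def ubar_def by simp
qed

lemma equilibrium_g_theta: "i < p \<Longrightarrow> g i (ths i) = ub i"
  using equilibrium_g_eq_phi equilibrium_phi by simp

lemma equilibrium_flows:
  assumes "i < n"
  shows "(\<Sum>k<m. B i k * f k (ms k)) = Emul p ub i - d i"
proof -
  have "rhs_x m p B f g d ms ths i = 0" using eq assms unfolding equilibrium_def by blast
  moreover have "Emul p (\<lambda>j. g j (ths j)) i = Emul p ub i"
    using equilibrium_g_theta unfolding Emul_def by simp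
  ultimately show ?thesis unfolding rhs_x_def by linarith
qed

end

lemma sum_ubar: "(\<Sum>i<p. ub i) = (\<Sum>i<n. d i)"
  using sum_rhs_x[of mub thb] equilibrium_given equilibrium_g_theta[OF equilibrium_given]
  unfolding equilibrium_def by simp

end

lemma (in cont_strict_mono) bdd_halfline_if_bregman_le:
  assumes "w > 0" "\<forall>t\<ge>0. w * bregman F c (y t) \<le> C"
  shows "bdd_halfline y"
proof -
  obtain R where R: "\<forall>v. bregman F c v \<le> C / w \<longrightarrow> \<bar>v\<bar> \<le> R"
    using bregman_sublevel_bounded by blast
  have "\<bar>y t\<bar> \<le> R" if "t \<ge> 0" for t
    using R assms that by (simp add: field_simps)
  then show ?thesis unfolding bdd_halfline_def by blast
qed

lemma bdd_halfline_if_square_le: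
  assumes "w > 0" "\<forall>t\<ge>0. w * (y t - c)^2 / 2 \<le> C"
  shows "bdd_halfline y"
proof -
  have "\<bar>y t\<bar> \<le> \<bar>c\<bar> + sqrt (2 * C / w)" if "t \<ge> 0" for t
  proof -
    have "(y t - c)^2 \<le> 2 * C / w" using assms that by (simp add: field_simps)
    then have "\<bar>y t - c\<bar> \<le> sqrt (2 * C / w)" using real_sqrt_le_mono by fastforce
    then show ?thesis by linarith
  qed
  then show ?thesis unfolding bdd_halfline_def by blast
qed

section \<open>The Lyapunov function\<close>

context closed_loop begin

lemma has_deriv_x: "i < n \<Longrightarrow> has_deriv_on_halfline (\<lambda>t. x t i) (\<lambda>t. rhs_x m p B f g d (\<mu> t) (\<theta> t) i / tx i)"
  and has_deriv_mu: "k < m \<Longrightarrow> has_deriv_on_halfline (\<lambda>t. \<mu> t k) (\<lambda>t. rhs_mu n B h f ybar (x t) (\<mu> t) (\<xi> t) k / tmu k)"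
  and has_deriv_xi: "k < m \<Longrightarrow> has_deriv_on_halfline (\<lambda>t. \<xi> t k) (\<lambda>t. rhs_xi f (\<mu> t) (\<xi> t) k / txi k)"
  and has_deriv_theta: "i < p \<Longrightarrow> has_deriv_on_halfline (\<lambda>t. \<theta> t i) (\<lambda>t. rhs_theta h g ybar (x t) (\<theta> t) (\<phi> t) i / tth i)"
  and has_deriv_phi: "i < p \<Longrightarrow> has_deriv_on_halfline (\<lambda>t. \<phi> t i) (\<lambda>t. rhs_phi p L q r g (\<theta> t) (\<phi> t) i / tph i)"
  using sol unfolding has_deriv_on_halfline_def by blast+

lemma cont_strict_mono_h: "i < n \<Longrightarrow> cont_strict_mono (h i)"
  and cont_strict_mono_f: "k < m \<Longrightarrow> cont_strict_mono (f k)"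
  and cont_strict_mono_g: "i < p \<Longrightarrow> cont_strict_mono (g i)"
  using h_C1 f_C1 g_C1 C1_strict_incr_cont_strict_mono by blast+

definition lyap ::
    "(nat \<Rightarrow> real) \<Rightarrow> (nat \<Rightarrow> real) \<Rightarrow> (nat \<Rightarrow> real) \<Rightarrow> (nat \<Rightarrow> real) \<Rightarrow> (nat \<Rightarrow> real) \<Rightarrow> real \<Rightarrow> real" where
  "lyap xs ms xis ths phs t =
     (\<Sum>i<n. tx i * bregman (h i) (xs i) (x t i)) + (\<Sum>k<m. tmu k * bregman (f k) (ms k) (\<mu> t k)) +
     (\<Sum>k<m. txi k * (\<xi> t k - xis k)^2 / 2) + (\<Sum>i<p. tth i * bregman (g i) (ths i) (\<theta> t i)) +
     (\<Sum>i<p. tph i * (\<phi> t i - phs i)^2 / 2)"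

definition lyap_deriv ::
    "(nat \<Rightarrow> real) \<Rightarrow> (nat \<Rightarrow> real) \<Rightarrow> (nat \<Rightarrow> real) \<Rightarrow> (nat \<Rightarrow> real) \<Rightarrow> (nat \<Rightarrow> real) \<Rightarrow> real \<Rightarrow> real" where
  "lyap_deriv xs ms xis ths phs t =
     (\<Sum>i<n. (h i (x t i) - h i (xs i)) * rhs_x m p B f g d (\<mu> t) (\<theta> t) i) +
     (\<Sum>k<m. (f k (\<mu> t k) - f k (ms k)) * rhs_mu n B h f ybar (x t) (\<mu> t) (\<xi> t) k) +
     (\<Sum>k<m. (\<xi> t k - xis k) * rhs_xi f (\<mu> t) (\<xi> t) k) +
     (\<Sum>i<p. (g i (\<theta> t i) - g i (ths i)) * rhs_theta h g ybar (x t) (\<theta> t) (\<phi> t) i) +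
     (\<Sum>i<p. (\<phi> t i - phs i) * rhs_phi p L q r g (\<theta> t) (\<phi> t) i)"

lemma has_deriv_lyap: "has_deriv_on_halfline (lyap xs ms xis ths phs) (lyap_deriv xs ms xis ths phs)"
  unfolding lyap_def[abs_def] lyap_deriv_def[abs_def]
  by (intro has_deriv_on_halfline_add has_deriv_on_halfline_sum ballI
      cont_strict_mono.has_deriv_on_halfline_scaled_bregman has_deriv_on_halfline_scaled_square
      cont_strict_mono_h cont_strict_mono_f cont_strict_mono_g
      has_deriv_x has_deriv_mu has_deriv_xi has_deriv_theta has_deriv_phi)
     (use tx_pos tmu_pos txi_pos tth_pos tph_pos in auto)

definition cons_err :: "real \<Rightarrow> nat \<Rightarrow> real" where
  "cons_err t i = q i * (\<phi> t i - ub i)"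

definition dissipation :: "real \<Rightarrow> real" where
  "dissipation t = (\<Sum>k<m. (f k (\<mu> t k) - \<xi> t k)^2) + (\<Sum>i<p. (g i (\<theta> t i) - \<phi> t i)^2) +
     (\<Sum>i<p. \<Sum>j<p. a i j * (cons_err t i - cons_err t j)^2) / 2"

lemma L_mult_cons_err:
  assumes "i < p"
  shows "(\<Sum>j<p. L i j * (q j * \<phi> t j + r j)) = (\<Sum>j<p. L i j * cons_err t j)"
proof -
  have "(\<Sum>j<p. L i j * (q j * \<phi> t j + r j)) =
        (\<Sum>j<p. L i j * cons_err t j + L i j * (q j * phb j + r j))"
    by (rule sum.cong)
       (use equilibrium_phi[OF equilibrium_given] in \<open>auto simp: cons_err_def algebra_simps\<close>)
  then show ?thesis
    using equilibrium_laplacian_zero[OF equilibrium_given assms] by (simp add: sum.distrib)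
qed

context
  fixes xs ms xis ths phs :: "nat \<Rightarrow> real"
  assumes eq: "equilibrium xs ms xis ths phs"
begin

lemma lyap_deriv_x_part:
  "(\<Sum>i<n. (h i (x t i) - h i (xs i)) * rhs_x m p B f g d (\<mu> t) (\<theta> t) i) =
   - (\<Sum>k<m. (f k (\<mu> t k) - f k (ms k)) * (\<Sum>i<n. B i k * (h i (x t i) - ybar i))) +
   (\<Sum>i<p. (h i (x t i) - ybar i) * (g i (\<theta> t i) - ub i))"
proof -
  define e where "e i = h i (x t i) - ybar i" for i
  define \<delta> where "\<delta> k = f k (\<mu> t k) - f k (ms k)" for k
  have rhs: "rhs_x m p B f g d (\<mu> t) (\<theta> t) i =
      - (\<Sum>k<m. B i k * \<delta> k) + Emul p (\<lambda>j. g j (\<theta> t j) - ub j) i" if "i < n" for i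
    using equilibrium_flows[OF eq that] unfolding rhs_x_def \<delta>_def Emul_def
    by (auto simp: sum_subtractf right_diff_distrib)
  have "(\<Sum>i<n. (h i (x t i) - h i (xs i)) * rhs_x m p B f g d (\<mu> t) (\<theta> t) i) =
        (\<Sum>i<n. - (\<Sum>k<m. e i * B i k * \<delta> k) + e i * Emul p (\<lambda>j. g j (\<theta> t j) - ub j) i)"
    by (rule sum.cong)
       (auto simp: rhs equilibrium_output_error_zero[OF eq] e_def sum_distrib_left algebra_simps)
  also have "\<dots> = - (\<Sum>i<n. \<Sum>k<m. e i * B i k * \<delta> k) + (\<Sum>i<p. e i * (g i (\<theta> t i) - ub i))"
    by (simp add: sum_subtractf sum_mult_Emul[OF p_le])
  also have "(\<Sum>i<n. \<Sum>k<m. e i * B i k * \<delta> k) = (\<Sum>k<m. \<delta> k * (\<Sum>i<n. B i k * e i))"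
    by (subst sum.swap) (simp add: sum_distrib_left algebra_simps)
  finally show ?thesis unfolding e_def \<delta>_def .
qed

lemma lyap_deriv_mu_xi_part:
  "(\<Sum>k<m. (f k (\<mu> t k) - f k (ms k)) * rhs_mu n B h f ybar (x t) (\<mu> t) (\<xi> t) k) +
   (\<Sum>k<m. (\<xi> t k - xis k) * rhs_xi f (\<mu> t) (\<xi> t) k) =
   (\<Sum>k<m. (f k (\<mu> t k) - f k (ms k)) * (\<Sum>i<n. B i k * (h i (x t i) - ybar i)) - (f k (\<mu> t k) - \<xi> t k)^2)"
  unfolding sum.distrib[symmetric]
  by (rule sum.cong) (auto simp: rhs_mu_def rhs_xi_def equilibrium_xi[OF eq] power2_eq_square algebra_simps)

lemma lyap_deriv_theta_phi_part:
  "(\<Sum>i<p. (g i (\<theta> t i) - g i (ths i)) * rhs_theta h g ybar (x t) (\<theta> t) (\<phi> t) i) +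
   (\<Sum>i<p. (\<phi> t i - phs i) * rhs_phi p L q r g (\<theta> t) (\<phi> t) i) =
   (\<Sum>i<p. - ((g i (\<theta> t i) - ub i) * (h i (x t i) - ybar i)) - (g i (\<theta> t i) - \<phi> t i)^2
      - cons_err t i * (\<Sum>j<p. L i j * cons_err t j))"
  unfolding sum.distrib[symmetric]
proof (rule sum.cong)
  fix i assume "i \<in> {..<p}"
  then have i: "i < p" by simp
  show "(g i (\<theta> t i) - g i (ths i)) * rhs_theta h g ybar (x t) (\<theta> t) (\<phi> t) i +
        (\<phi> t i - phs i) * rhs_phi p L q r g (\<theta> t) (\<phi> t) i =
        - ((g i (\<theta> t i) - ub i) * (h i (x t i) - ybar i)) - (g i (\<theta> t i) - \<phi> t i)^2
        - cons_err t i * (\<Sum>j<p. L i j * cons_err t j)"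
    unfolding rhs_phi_def L_mult_cons_err[OF i]
    using equilibrium_g_theta[OF eq i] equilibrium_phi[OF eq i]
    by (simp add: rhs_theta_def cons_err_def power2_eq_square algebra_simps)
qed simp

lemma lyap_deriv_eq: "lyap_deriv xs ms xis ths phs t = - dissipation t"
proof -
  have "lyap_deriv xs ms xis ths phs t =
      - (\<Sum>k<m. (f k (\<mu> t k) - \<xi> t k)^2) - (\<Sum>i<p. (g i (\<theta> t i) - \<phi> t i)^2)
      - (\<Sum>i<p. cons_err t i * (\<Sum>j<p. L i j * cons_err t j))"
    unfolding lyap_deriv_def add.assoc[symmetric]
    unfolding lyap_deriv_x_part lyap_deriv_mu_xi_part add.assoc lyap_deriv_theta_phi_part
    by (simp add: sum.distrib sum_subtractf algebra_simps)
  then show ?thesis unfolding dissipation_def L_quadratic_form by simp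
qed

end

lemma dissipation_nonneg: "dissipation t \<ge> 0"
  unfolding dissipation_def using laplacian_energy_nonneg[OF digraph, of "cons_err t"]
  by (intro add_nonneg_nonneg sum_nonneg) auto

lemma lyap_terms_nonneg:
  shows "i < n \<Longrightarrow> 0 \<le> tx i * bregman (h i) (xs i) (x t i)"
    and "k < m \<Longrightarrow> 0 \<le> tmu k * bregman (f k) (ms k) (\<mu> t k)"
    and "k < m \<Longrightarrow> 0 \<le> txi k * (\<xi> t k - xis k)^2 / 2"
    and "i < p \<Longrightarrow> 0 \<le> tth i * bregman (g i) (ths i) (\<theta> t i)"
    and "i < p \<Longrightarrow> 0 \<le> tph i * (\<phi> t i - phs i)^2 / 2"
  using tx_pos tmu_pos txi_pos tth_pos tph_pos
    cont_strict_mono.bregman_nonneg[OF cont_strict_mono_h] cont_strict_mono.bregman_nonneg[OF cont_strict_mono_f]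
    cont_strict_mono.bregman_nonneg[OF cont_strict_mono_g]
  by (auto intro!: mult_nonneg_nonneg simp: order_less_imp_le)

lemma lyap_nonneg: "lyap xs ms xis ths phs t \<ge> 0"
  unfolding lyap_def using lyap_terms_nonneg by (intro add_nonneg_nonneg sum_nonneg) blast+

lemma lyap_ge_terms:
  shows "i < n \<Longrightarrow> tx i * bregman (h i) (xs i) (x t i) \<le> lyap xs ms xis ths phs t"
    and "k < m \<Longrightarrow> tmu k * bregman (f k) (ms k) (\<mu> t k) \<le> lyap xs ms xis ths phs t"
    and "k < m \<Longrightarrow> txi k * (\<xi> t k - xis k)^2 / 2 \<le> lyap xs ms xis ths phs t"
    and "i < p \<Longrightarrow> tth i * bregman (g i) (ths i) (\<theta> t i) \<le> lyap xs ms xis ths phs t"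
    and "i < p \<Longrightarrow> tph i * (\<phi> t i - phs i)^2 / 2 \<le> lyap xs ms xis ths phs t"
proof -
  note nn = lyap_terms_nonneg
  have sums: "0 \<le> (\<Sum>i<n. tx i * bregman (h i) (xs i) (x t i))"
    "0 \<le> (\<Sum>k<m. tmu k * bregman (f k) (ms k) (\<mu> t k))"
    "0 \<le> (\<Sum>k<m. txi k * (\<xi> t k - xis k)^2 / 2)"
    "0 \<le> (\<Sum>i<p. tth i * bregman (g i) (ths i) (\<theta> t i))"
    "0 \<le> (\<Sum>i<p. tph i * (\<phi> t i - phs i)^2 / 2)"
    using nn by (auto intro!: sum_nonneg)
  show "i < n \<Longrightarrow> tx i * bregman (h i) (xs i) (x t i) \<le> lyap xs ms xis ths phs t"
    using member_le_sum[of i "{..<n}" "\<lambda>i. tx i * bregman (h i) (xs i) (x t i)"] nn sums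
    unfolding lyap_def by simp
  show "k < m \<Longrightarrow> tmu k * bregman (f k) (ms k) (\<mu> t k) \<le> lyap xs ms xis ths phs t"
    using member_le_sum[of k "{..<m}" "\<lambda>k. tmu k * bregman (f k) (ms k) (\<mu> t k)"] nn sums
    unfolding lyap_def by simp
  show "k < m \<Longrightarrow> txi k * (\<xi> t k - xis k)^2 / 2 \<le> lyap xs ms xis ths phs t"
    using member_le_sum[of k "{..<m}" "\<lambda>k. txi k * (\<xi> t k - xis k)^2 / 2"] nn sums
    unfolding lyap_def by simp
  show "i < p \<Longrightarrow> tth i * bregman (g i) (ths i) (\<theta> t i) \<le> lyap xs ms xis ths phs t"
    using member_le_sum[of i "{..<p}" "\<lambda>i. tth i * bregman (g i) (ths i) (\<theta> t i)"] nn sums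
    unfolding lyap_def by simp
  show "i < p \<Longrightarrow> tph i * (\<phi> t i - phs i)^2 / 2 \<le> lyap xs ms xis ths phs t"
    using member_le_sum[of i "{..<p}" "\<lambda>i. tph i * (\<phi> t i - phs i)^2 / 2"] nn sums
    unfolding lyap_def by simp
qed

lemma lyap_antimono:
  assumes "equilibrium xs ms xis ths phs" "0 \<le> s" "s \<le> t"
  shows "lyap xs ms xis ths phs t \<le> lyap xs ms xis ths phs s"
  by (rule antimono_if_deriv_nonpos[OF has_deriv_lyap _ assms(2,3)])
     (use lyap_deriv_eq[OF assms(1)] dissipation_nonneg in auto)

end

section \<open>Boundedness and vanishing dissipation\<close>

context closed_loop begin

lemma lyap_given_le_initial: "t \<ge> 0 \<Longrightarrow> lyap xb mub xib thb phb t \<le> lyap xb mub xib thb phb 0"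
  using lyap_antimono[OF equilibrium_given, of 0 t] by simp

lemma bdd_x:
  assumes "i < n" shows "bdd_halfline (\<lambda>t. x t i)"
proof (rule cont_strict_mono.bdd_halfline_if_bregman_le[OF cont_strict_mono_h[OF assms]])
  show "tx i > 0" using tx_pos assms by blast
  show "\<forall>t\<ge>0. tx i * bregman (h i) (xb i) (x t i) \<le> lyap xb mub xib thb phb 0"
    using lyap_ge_terms(1)[OF assms] lyap_given_le_initial order_trans by blast
qed

lemma bdd_mu:
  assumes "k < m" shows "bdd_halfline (\<lambda>t. \<mu> t k)"
proof (rule cont_strict_mono.bdd_halfline_if_bregman_le[OF cont_strict_mono_f[OF assms]])
  show "tmu k > 0" using tmu_pos assms by blast
  show "\<forall>t\<ge>0. tmu k * bregman (f k) (mub k) (\<mu> t k) \<le> lyap xb mub xib thb phb 0"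
    using lyap_ge_terms(2)[OF assms] lyap_given_le_initial order_trans by blast
qed

lemma bdd_xi:
  assumes "k < m" shows "bdd_halfline (\<lambda>t. \<xi> t k)"
proof (rule bdd_halfline_if_square_le)
  show "txi k > 0" using txi_pos assms by blast
  show "\<forall>t\<ge>0. txi k * (\<xi> t k - xib k)^2 / 2 \<le> lyap xb mub xib thb phb 0"
    using lyap_ge_terms(3)[OF assms] lyap_given_le_initial order_trans by blast
qed

lemma bdd_theta:
  assumes "i < p" shows "bdd_halfline (\<lambda>t. \<theta> t i)"
proof (rule cont_strict_mono.bdd_halfline_if_bregman_le[OF cont_strict_mono_g[OF assms]])
  show "tth i > 0" using tth_pos assms by blast
  show "\<forall>t\<ge>0. tth i * bregman (g i) (thb i) (\<theta> t i) \<le> lyap xb mub xib thb phb 0"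
    using lyap_ge_terms(4)[OF assms] lyap_given_le_initial order_trans by blast
qed

lemma bdd_phi:
  assumes "i < p" shows "bdd_halfline (\<lambda>t. \<phi> t i)"
proof (rule bdd_halfline_if_square_le)
  show "tph i > 0" using tph_pos assms by blast
  show "\<forall>t\<ge>0. tph i * (\<phi> t i - phb i)^2 / 2 \<le> lyap xb mub xib thb phb 0"
    using lyap_ge_terms(5)[OF assms] lyap_given_le_initial order_trans by blast
qed

lemma bdd_h_x: "i < n \<Longrightarrow> bdd_halfline (\<lambda>t. h i (x t i))"
  and bdd_f_mu: "k < m \<Longrightarrow> bdd_halfline (\<lambda>t. f k (\<mu> t k))"
  and bdd_g_theta: "i < p \<Longrightarrow> bdd_halfline (\<lambda>t. g i (\<theta> t i))"
  using bdd_halfline_cont_comp[OF C1_strict_incr_isCont] h_C1 f_C1 g_C1 bdd_x bdd_mu bdd_theta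
  by blast+

lemma bdd_Emul_g_theta: "bdd_halfline (\<lambda>t. Emul p (\<lambda>j. g j (\<theta> t j)) i)"
  using bdd_g_theta[of i] bdd_halfline_const[of 0] unfolding Emul_def by (cases "i < p") auto

lemma bdd_rhs_x: "bdd_halfline (\<lambda>t. rhs_x m p B f g d (\<mu> t) (\<theta> t) i / tx i)"
  unfolding rhs_x_def
  by (intro bdd_halfline_divide bdd_halfline_diff bdd_halfline_add bdd_halfline_minus bdd_halfline_sum
      bdd_halfline_mult bdd_halfline_const bdd_Emul_g_theta ballI bdd_f_mu) auto

lemma bdd_rhs_mu: "k < m \<Longrightarrow> bdd_halfline (\<lambda>t. rhs_mu n B h f ybar (x t) (\<mu> t) (\<xi> t) k / tmu k)"
  unfolding rhs_mu_def
  by (intro bdd_halfline_divide bdd_halfline_diff bdd_halfline_sum bdd_halfline_mult bdd_halfline_const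
      ballI bdd_f_mu bdd_h_x bdd_xi) auto

lemma bdd_rhs_xi: "k < m \<Longrightarrow> bdd_halfline (\<lambda>t. rhs_xi f (\<mu> t) (\<xi> t) k / txi k)"
  unfolding rhs_xi_def by (intro bdd_halfline_divide bdd_halfline_diff bdd_f_mu bdd_xi)

lemma bdd_rhs_theta: "i < p \<Longrightarrow> bdd_halfline (\<lambda>t. rhs_theta h g ybar (x t) (\<theta> t) (\<phi> t) i / tth i)"
  unfolding rhs_theta_def using p_le
  by (intro bdd_halfline_divide bdd_halfline_diff bdd_halfline_minus bdd_halfline_const bdd_h_x
      bdd_g_theta bdd_phi) auto

lemma bdd_rhs_phi: "i < p \<Longrightarrow> bdd_halfline (\<lambda>t. rhs_phi p L q r g (\<theta> t) (\<phi> t) i / tph i)"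
  unfolding rhs_phi_def
  by (intro bdd_halfline_divide bdd_halfline_diff bdd_halfline_mult bdd_halfline_add bdd_halfline_sum
      bdd_halfline_const bdd_g_theta bdd_phi ballI) auto

lemma bdd_lipschitz_x: "i < n \<Longrightarrow> bdd_lipschitz (\<lambda>t. x t i)"
  by (rule bdd_lipschitz_if_deriv_bdd[OF bdd_x has_deriv_x bdd_rhs_x])

lemma bdd_lipschitz_mu: "k < m \<Longrightarrow> bdd_lipschitz (\<lambda>t. \<mu> t k)"
  by (rule bdd_lipschitz_if_deriv_bdd[OF bdd_mu has_deriv_mu bdd_rhs_mu])

lemma bdd_lipschitz_xi: "k < m \<Longrightarrow> bdd_lipschitz (\<lambda>t. \<xi> t k)"
  by (rule bdd_lipschitz_if_deriv_bdd[OF bdd_xi has_deriv_xi bdd_rhs_xi])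

lemma bdd_lipschitz_theta: "i < p \<Longrightarrow> bdd_lipschitz (\<lambda>t. \<theta> t i)"
  by (rule bdd_lipschitz_if_deriv_bdd[OF bdd_theta has_deriv_theta bdd_rhs_theta])

lemma bdd_lipschitz_phi: "i < p \<Longrightarrow> bdd_lipschitz (\<lambda>t. \<phi> t i)"
  by (rule bdd_lipschitz_if_deriv_bdd[OF bdd_phi has_deriv_phi bdd_rhs_phi])

lemma bdd_lipschitz_h_x: "i < n \<Longrightarrow> bdd_lipschitz (\<lambda>t. h i (x t i))"
  using bdd_lipschitz_C1_comp[OF _ bdd_lipschitz_x] h_C1 by blast

lemma bdd_lipschitz_f_mu: "k < m \<Longrightarrow> bdd_lipschitz (\<lambda>t. f k (\<mu> t k))"
  using bdd_lipschitz_C1_comp[OF _ bdd_lipschitz_mu] f_C1 by blast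

lemma bdd_lipschitz_g_theta: "i < p \<Longrightarrow> bdd_lipschitz (\<lambda>t. g i (\<theta> t i))"
  using bdd_lipschitz_C1_comp[OF _ bdd_lipschitz_theta] g_C1 by blast

lemma bdd_lipschitz_cons_err: "i < p \<Longrightarrow> bdd_lipschitz (\<lambda>t. cons_err t i)"
  unfolding cons_err_def by (intro bdd_lipschitz_cmult bdd_lipschitz_diff bdd_lipschitz_phi bdd_lipschitz_const)

lemma bdd_lipschitz_dissipation: "bdd_lipschitz dissipation"
  unfolding dissipation_def[abs_def]
  by (intro bdd_lipschitz_add bdd_lipschitz_divide bdd_lipschitz_sum ballI bdd_lipschitz_cmult
      bdd_lipschitz_power2 bdd_lipschitz_diff bdd_lipschitz_f_mu bdd_lipschitz_xi
      bdd_lipschitz_g_theta bdd_lipschitz_phi bdd_lipschitz_cons_err) auto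

lemma dissipation_tendsto_zero: "(dissipation \<longlongrightarrow> 0) at_top"
proof (rule barbalat[OF has_deriv_lyap[of xb mub xib thb phb]])
  show "lipschitz_halfline dissipation" using bdd_lipschitz_dissipation unfolding bdd_lipschitz_def ..
  show "\<forall>t\<ge>0. lyap_deriv xb mub xib thb phb t \<le> - dissipation t"
    using lyap_deriv_eq[OF equilibrium_given] by simp
qed (use lyap_nonneg dissipation_nonneg in auto)

lemma dissipation_ge_terms:
  shows "k < m \<Longrightarrow> (f k (\<mu> t k) - \<xi> t k)^2 \<le> dissipation t"
    and "i < p \<Longrightarrow> (g i (\<theta> t i) - \<phi> t i)^2 \<le> dissipation t"
    and "i < p \<Longrightarrow> j < p \<Longrightarrow> a i j * (cons_err t i - cons_err t j)^2 / 2 \<le> dissipation t"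
proof -
  have a_nonneg: "\<forall>i<p. \<forall>j<p. a i j \<ge> 0" using digraph unfolding weighted_digraph_def by blast
  have sums: "(\<Sum>k<m. (f k (\<mu> t k) - \<xi> t k)^2) \<ge> 0" "(\<Sum>i<p. (g i (\<theta> t i) - \<phi> t i)^2) \<ge> 0"
    "(\<Sum>i<p. \<Sum>j<p. a i j * (cons_err t i - cons_err t j)^2) / 2 \<ge> 0"
    using laplacian_energy_nonneg[OF digraph, of "cons_err t"] by (auto intro: sum_nonneg)
  show "k < m \<Longrightarrow> (f k (\<mu> t k) - \<xi> t k)^2 \<le> dissipation t"
    using member_le_sum[of k "{..<m}" "\<lambda>k. (f k (\<mu> t k) - \<xi> t k)^2"] sums
    unfolding dissipation_def by simp
  show "i < p \<Longrightarrow> (g i (\<theta> t i) - \<phi> t i)^2 \<le> dissipation t"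
    using member_le_sum[of i "{..<p}" "\<lambda>i. (g i (\<theta> t i) - \<phi> t i)^2"] sums
    unfolding dissipation_def by simp
  assume i: "i < p" and j: "j < p"
  have "a i j * (cons_err t i - cons_err t j)^2 \<le> (\<Sum>j<p. a i j * (cons_err t i - cons_err t j)^2)"
    by (rule member_le_sum) (use j a_nonneg i in auto)
  also have "\<dots> \<le> (\<Sum>i<p. \<Sum>j<p. a i j * (cons_err t i - cons_err t j)^2)"
    by (rule member_le_sum[of i "{..<p}" "\<lambda>i. \<Sum>j<p. a i j * (cons_err t i - cons_err t j)^2"])
       (use i a_nonneg in \<open>auto intro!: sum_nonneg\<close>)
  finally show "a i j * (cons_err t i - cons_err t j)^2 / 2 \<le> dissipation t"
    unfolding dissipation_def using sums by linarith
qed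

lemma f_mu_minus_xi_tendsto_zero: "k < m \<Longrightarrow> ((\<lambda>t. f k (\<mu> t k) - \<xi> t k) \<longlongrightarrow> 0) at_top"
  by (rule tendsto_zero_if_power2_tendsto_zero, rule tendsto_zero_if_le_halfline[OF dissipation_tendsto_zero])
     (use dissipation_ge_terms(1) in auto)

lemma g_theta_minus_phi_tendsto_zero: "i < p \<Longrightarrow> ((\<lambda>t. g i (\<theta> t i) - \<phi> t i) \<longlongrightarrow> 0) at_top"
  by (rule tendsto_zero_if_power2_tendsto_zero, rule tendsto_zero_if_le_halfline[OF dissipation_tendsto_zero])
     (use dissipation_ge_terms(2) in auto)

lemma cons_err_consensus_tendsto:
  assumes "i < p" "j < p"
  shows "((\<lambda>t. cons_err t i - cons_err t j) \<longlongrightarrow> 0) at_top"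
proof -
  have "((\<lambda>t. cons_err t i' - cons_err t j') \<longlongrightarrow> 0) at_top"
    if ij: "i' < p" "j' < p" "a i' j' > 0" for i' j'
  proof (rule tendsto_zero_if_power2_tendsto_zero)
    have "((\<lambda>t. a i' j' * (cons_err t i' - cons_err t j')^2 / 2) \<longlongrightarrow> 0) at_top"
      by (rule tendsto_zero_if_le_halfline[OF dissipation_tendsto_zero])
         (use dissipation_ge_terms(3)[OF ij(1,2)] ij(3) in auto)
    then have "((\<lambda>t. (2 / a i' j') * (a i' j' * (cons_err t i' - cons_err t j')^2 / 2))
        \<longlongrightarrow> (2 / a i' j') * 0) at_top"
      by (intro tendsto_mult tendsto_const)
    then show "((\<lambda>t. (cons_err t i' - cons_err t j')^2) \<longlongrightarrow> 0) at_top" using ij(3) by simp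
  qed
  then show ?thesis using strongly_connected_tendsto_consensus[OF sconn _ assms] by blast
qed

end

section \<open>Convergence of the outputs, inputs and controller states\<close>

context closed_loop begin

lemma laplacian_term_tendsto_zero:
  assumes i: "i < p"
  shows "((\<lambda>t. \<Sum>j<p. L i j * (q j * \<phi> t j + r j)) \<longlongrightarrow> 0) at_top"
proof -
  have "(\<Sum>j<p. L i j * (q j * \<phi> t j + r j)) = (\<Sum>j<p. L i j * (cons_err t j - cons_err t 0))" for t
    using L_mult_cons_err[OF i, of t] L_row_sum[OF i]
    by (simp add: right_diff_distrib sum_subtractf sum_distrib_right[symmetric])
  moreover have "((\<lambda>t. \<Sum>j<p. L i j * (cons_err t j - cons_err t 0)) \<longlongrightarrow> (\<Sum>j<p. L i j * 0)) at_top"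
    by (intro tendsto_sum tendsto_mult tendsto_const cons_err_consensus_tendsto) (use p_ge in auto)
  ultimately show ?thesis by simp
qed

lemma slowly_varying_phi: "i < p \<Longrightarrow> slowly_varying (\<lambda>t. \<phi> t i)"
proof (rule slowly_varying_if_deriv_tendsto_zero[OF has_deriv_phi])
  assume i: "i < p"
  have "((\<lambda>t. ((g i (\<theta> t i) - \<phi> t i) - q i * (\<Sum>j<p. L i j * (q j * \<phi> t j + r j))) / tph i)
      \<longlongrightarrow> ((0 - q i * 0) / tph i)) at_top"
    by (intro tendsto_divide tendsto_diff tendsto_mult tendsto_const g_theta_minus_phi_tendsto_zero
        laplacian_term_tendsto_zero i) (use tph_pos i in auto)
  then show "((\<lambda>t. rhs_phi p L q r g (\<theta> t) (\<phi> t) i / tph i) \<longlongrightarrow> 0) at_top"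
    unfolding rhs_phi_def by simp
qed

lemma slowly_varying_theta:
  assumes i: "i < p"
  shows "slowly_varying (\<lambda>t. \<theta> t i)"
proof -
  have "slowly_varying (\<lambda>t. \<phi> t i + (g i (\<theta> t i) - \<phi> t i))"
    by (rule slowly_varying_add[OF slowly_varying_phi[OF i]
          slowly_varying_if_convergent[OF g_theta_minus_phi_tendsto_zero[OF i]]])
  then have "slowly_varying (\<lambda>t. g i (\<theta> t i))" by simp
  then show ?thesis
    using slowly_varying_strict_mono_cancel[OF C1_strict_incr_strict_mono C1_strict_incr_isCont
        bdd_theta[OF i]] g_C1 i by blast
qed

lemma slowly_varying_xi:
  assumes k: "k < m"
  shows "slowly_varying (\<lambda>t. \<xi> t k)"
proof (rule slowly_varying_if_deriv_tendsto_zero[OF has_deriv_xi[OF k]])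
  have "((\<lambda>t. rhs_xi f (\<mu> t) (\<xi> t) k / txi k) \<longlongrightarrow> 0 / txi k) at_top"
    unfolding rhs_xi_def by (intro tendsto_divide f_mu_minus_xi_tendsto_zero k tendsto_const) (use txi_pos k in auto)
  then show "((\<lambda>t. rhs_xi f (\<mu> t) (\<xi> t) k / txi k) \<longlongrightarrow> 0) at_top" by simp
qed

lemma slowly_varying_mu:
  assumes k: "k < m"
  shows "slowly_varying (\<lambda>t. \<mu> t k)"
proof -
  have "slowly_varying (\<lambda>t. \<xi> t k + (f k (\<mu> t k) - \<xi> t k))"
    by (rule slowly_varying_add[OF slowly_varying_xi[OF k]
          slowly_varying_if_convergent[OF f_mu_minus_xi_tendsto_zero[OF k]]])
  then have "slowly_varying (\<lambda>t. f k (\<mu> t k))" by simp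
  then show ?thesis
    using slowly_varying_strict_mono_cancel[OF C1_strict_incr_strict_mono C1_strict_incr_isCont
        bdd_mu[OF k]] f_C1 k by blast
qed

lemma input_output_error_tendsto_zero:
  assumes i: "i < p"
  shows "((\<lambda>t. h i (x t i) - ybar i) \<longlongrightarrow> 0) at_top"
proof -
  have tth: "tth i > 0" using tth_pos i by blast
  have "((\<lambda>t. - (h i (x t i) - ybar i) / tth i) \<longlongrightarrow> 0) at_top"
  proof (rule barbalat_slowly_varying[OF has_deriv_theta[OF i]])
    show "\<forall>t\<ge>0. rhs_theta h g ybar (x t) (\<theta> t) (\<phi> t) i / tth i =
      - (h i (x t i) - ybar i) / tth i + (- (g i (\<theta> t i) - \<phi> t i) / tth i)"
      unfolding rhs_theta_def by (simp add: diff_divide_distrib add_divide_distrib)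
    show "lipschitz_halfline (\<lambda>t. - (h i (x t i) - ybar i) / tth i)"
      using bdd_lipschitz_divide[OF bdd_lipschitz_minus[OF bdd_lipschitz_diff[OF
          bdd_lipschitz_h_x bdd_lipschitz_const]]] i p_le
      unfolding bdd_lipschitz_def by fastforce
    have "((\<lambda>t. - (g i (\<theta> t i) - \<phi> t i) / tth i) \<longlongrightarrow> - 0 / tth i) at_top"
      by (intro tendsto_divide tendsto_minus g_theta_minus_phi_tendsto_zero i tendsto_const) (use tth in auto)
    then show "((\<lambda>t. - (g i (\<theta> t i) - \<phi> t i) / tth i) \<longlongrightarrow> 0) at_top" by simp
  qed (rule slowly_varying_theta[OF i])
  from tendsto_mult[OF tendsto_const[of "- tth i"] this] show ?thesis using tth by simp
qed

lemma edge_output_error_tendsto_zero: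
  assumes k: "k < m"
  shows "((\<lambda>t. \<Sum>i<n. B i k * (h i (x t i) - ybar i)) \<longlongrightarrow> 0) at_top"
proof -
  have tmu: "tmu k > 0" using tmu_pos k by blast
  have "((\<lambda>t. (\<Sum>i<n. B i k * (h i (x t i) - ybar i)) / tmu k) \<longlongrightarrow> 0) at_top"
  proof (rule barbalat_slowly_varying[OF has_deriv_mu[OF k]])
    show "\<forall>t\<ge>0. rhs_mu n B h f ybar (x t) (\<mu> t) (\<xi> t) k / tmu k =
      (\<Sum>i<n. B i k * (h i (x t i) - ybar i)) / tmu k + (- (f k (\<mu> t k) - \<xi> t k) / tmu k)"
      unfolding rhs_mu_def by (simp add: diff_divide_distrib add_divide_distrib)
    have "bdd_lipschitz (\<lambda>t. (\<Sum>i<n. B i k * (h i (x t i) - ybar i)) / tmu k)"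
      by (intro bdd_lipschitz_divide bdd_lipschitz_sum ballI bdd_lipschitz_cmult bdd_lipschitz_diff
          bdd_lipschitz_h_x bdd_lipschitz_const) auto
    then show "lipschitz_halfline (\<lambda>t. (\<Sum>i<n. B i k * (h i (x t i) - ybar i)) / tmu k)"
      unfolding bdd_lipschitz_def by blast
    have "((\<lambda>t. - (f k (\<mu> t k) - \<xi> t k) / tmu k) \<longlongrightarrow> - 0 / tmu k) at_top"
      by (intro tendsto_divide tendsto_minus f_mu_minus_xi_tendsto_zero k tendsto_const) (use tmu in auto)
    then show "((\<lambda>t. - (f k (\<mu> t k) - \<xi> t k) / tmu k) \<longlongrightarrow> 0) at_top" by simp
  qed (rule slowly_varying_mu[OF k])
  from tendsto_mult[OF tendsto_const[of "tmu k"] this] show ?thesis using tmu by simp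
qed

lemma output_error_tendsto_zero:
  assumes i: "i < n"
  shows "((\<lambda>t. h i (x t i) - ybar i) \<longlongrightarrow> 0) at_top"
proof -
  define e where "e t j = h j (x t j) - ybar j" for t j
  have "\<forall>k<m. ((\<lambda>t. e t (epos k) - e t (eneg k)) \<longlongrightarrow> 0) at_top"
    using edge_output_error_tendsto_zero B_mult_col unfolding e_def by simp
  then have "((\<lambda>t. e t i - e t 0) \<longlongrightarrow> 0) at_top"
    using connected_tendsto_consensus[OF conn _ i n_pos] by blast
  moreover have "((\<lambda>t. e t 0) \<longlongrightarrow> 0) at_top"
    using input_output_error_tendsto_zero[of 0] p_ge unfolding e_def by simp
  ultimately have "((\<lambda>t. (e t i - e t 0) + e t 0) \<longlongrightarrow> 0 + 0) at_top" by (intro tendsto_add)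
  then show ?thesis unfolding e_def by simp
qed

lemma x_tendsto:
  assumes i: "i < n"
  shows "((\<lambda>t. x t i) \<longlongrightarrow> xb i) at_top"
proof (rule tendsto_strict_mono_cancel[OF C1_strict_incr_strict_mono])
  show "C1_strict_incr (h i)" using h_C1 i by blast
  have "((\<lambda>t. (h i (x t i) - ybar i) + ybar i) \<longlongrightarrow> 0 + ybar i) at_top"
    by (intro tendsto_add output_error_tendsto_zero i tendsto_const)
  then show "((\<lambda>t. h i (x t i)) \<longlongrightarrow> h i (xb i)) at_top"
    using equilibrium_output_error_zero[OF equilibrium_given i] by simp
qed

text \<open>Conservation: the total storage \<Sum> tx x has derivative \<Sum> g(\<theta>) - \<Sum> d and converges.\<close>

lemma sum_g_theta_tendsto: "((\<lambda>t. (\<Sum>i<p. g i (\<theta> t i)) - (\<Sum>i<n. d i)) \<longlongrightarrow> 0) at_top"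
proof (rule barbalat_slowly_varying)
  show "has_deriv_on_halfline (\<lambda>t. \<Sum>i<n. tx i * x t i) (\<lambda>t. \<Sum>i<n. rhs_x m p B f g d (\<mu> t) (\<theta> t) i)"
  proof -
    have "has_deriv_on_halfline (\<lambda>t. tx i * x t i) (\<lambda>t. rhs_x m p B f g d (\<mu> t) (\<theta> t) i)"
      if "i < n" for i
      unfolding has_deriv_on_halfline_def
    proof (intro allI impI)
      fix t :: real assume "t \<ge> 0"
      then have "((\<lambda>s. x s i) has_real_derivative rhs_x m p B f g d (\<mu> t) (\<theta> t) i / tx i)
          (at t within {0..})"
        using has_deriv_x[OF that] unfolding has_deriv_on_halfline_def by blast
      from DERIV_cmult[OF this, of "tx i"]
      show "((\<lambda>s. tx i * x s i) has_real_derivative rhs_x m p B f g d (\<mu> t) (\<theta> t) i)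
          (at t within {0..})"
        using tx_pos that by (simp add: order_less_imp_not_eq2)
    qed
    then show ?thesis by (intro has_deriv_on_halfline_sum) auto
  qed
  show "\<forall>t\<ge>0. (\<Sum>i<n. rhs_x m p B f g d (\<mu> t) (\<theta> t) i) = ((\<Sum>i<p. g i (\<theta> t i)) - (\<Sum>i<n. d i)) + 0"
    using sum_rhs_x by simp
  have "bdd_lipschitz (\<lambda>t. (\<Sum>i<p. g i (\<theta> t i)) - (\<Sum>i<n. d i))"
    by (intro bdd_lipschitz_diff bdd_lipschitz_sum ballI bdd_lipschitz_g_theta bdd_lipschitz_const) auto
  then show "lipschitz_halfline (\<lambda>t. (\<Sum>i<p. g i (\<theta> t i)) - (\<Sum>i<n. d i))"
    unfolding bdd_lipschitz_def by blast
  have "((\<lambda>t. \<Sum>i<n. tx i * x t i) \<longlongrightarrow> (\<Sum>i<n. tx i * xb i)) at_top"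
    by (intro tendsto_sum tendsto_mult tendsto_const x_tendsto) auto
  then show "slowly_varying (\<lambda>t. \<Sum>i<n. tx i * x t i)" by (rule slowly_varying_if_convergent)
qed simp

lemma cons_err_tendsto_zero:
  assumes i: "i < p"
  shows "((\<lambda>t. cons_err t i) \<longlongrightarrow> 0) at_top"
proof -
  define S where "S = (\<Sum>j<p. 1 / q j)"
  have S: "S > 0" unfolding S_def by (rule sum_inverse_q_pos)
  have "cons_err t 0 * S = ((\<Sum>i<p. g i (\<theta> t i)) - (\<Sum>i<n. d i)) - (\<Sum>i<p. g i (\<theta> t i) - \<phi> t i)
      - (\<Sum>i<p. (cons_err t i - cons_err t 0) / q i)" for t
  proof -
    have "(\<Sum>i<p. \<phi> t i - ub i) = (\<Sum>i<p. (cons_err t i - cons_err t 0) / q i + cons_err t 0 * (1 / q i))"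
      by (rule sum.cong) (use q_pos in \<open>auto simp: cons_err_def field_simps\<close>)
    then show ?thesis using sum_ubar unfolding S_def by (simp add: sum.distrib sum_distrib_left sum_subtractf)
  qed
  moreover have "((\<lambda>t. ((\<Sum>i<p. g i (\<theta> t i)) - (\<Sum>i<n. d i)) - (\<Sum>i<p. g i (\<theta> t i) - \<phi> t i)
      - (\<Sum>i<p. (cons_err t i - cons_err t 0) / q i)) \<longlongrightarrow> 0 - (\<Sum>i<p. 0) - (\<Sum>i<p. 0 / q i)) at_top"
    by (intro tendsto_diff sum_g_theta_tendsto tendsto_sum g_theta_minus_phi_tendsto_zero tendsto_divide
        cons_err_consensus_tendsto tendsto_const) (use q_pos p_ge in auto)
  ultimately have "((\<lambda>t. cons_err t 0 * S / S) \<longlongrightarrow> 0 / S) at_top"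
    by (intro tendsto_divide tendsto_const) (use S in auto)
  then have "((\<lambda>t. (cons_err t i - cons_err t 0) + cons_err t 0) \<longlongrightarrow> 0 + 0) at_top"
    using S by (intro tendsto_add cons_err_consensus_tendsto i) (use p_ge in auto)
  then show ?thesis by simp
qed

lemma phi_tendsto:
  assumes i: "i < p"
  shows "((\<lambda>t. \<phi> t i) \<longlongrightarrow> phb i) at_top"
proof -
  have "q i > 0" using q_pos i by blast
  moreover have "((\<lambda>t. cons_err t i / q i + ub i) \<longlongrightarrow> 0 / q i + ub i) at_top"
    by (intro tendsto_add tendsto_divide cons_err_tendsto_zero i tendsto_const) (use q_pos i in auto)
  ultimately show ?thesis
    using equilibrium_phi[OF equilibrium_given i] by (simp add: cons_err_def)
qed

lemma theta_tendsto:
  assumes i: "i < p"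
  shows "((\<lambda>t. \<theta> t i) \<longlongrightarrow> thb i) at_top"
proof (rule tendsto_strict_mono_cancel[OF C1_strict_incr_strict_mono])
  show "C1_strict_incr (g i)" using g_C1 i by blast
  have "((\<lambda>t. \<phi> t i + (g i (\<theta> t i) - \<phi> t i)) \<longlongrightarrow> phb i + 0) at_top"
    by (intro tendsto_add phi_tendsto g_theta_minus_phi_tendsto_zero i)
  then show "((\<lambda>t. g i (\<theta> t i)) \<longlongrightarrow> g i (thb i)) at_top"
    using equilibrium_g_eq_phi[OF equilibrium_given i] by simp
qed

lemma flow_imbalance_tendsto_zero:
  assumes i: "i < n"
  shows "((\<lambda>t. \<Sum>k<m. B i k * (f k (\<mu> t k) - f k (mub k))) \<longlongrightarrow> 0) at_top"
proof -
  have tx: "tx i > 0" using tx_pos i by blast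
  have "((\<lambda>t. g i (\<theta> t i) - ub i) \<longlongrightarrow> 0) at_top" if "i < p"
  proof -
    have "((\<lambda>t. (\<phi> t i - phb i) + (g i (\<theta> t i) - \<phi> t i)) \<longlongrightarrow> 0 + 0) at_top"
      by (intro tendsto_add LIM_zero phi_tendsto g_theta_minus_phi_tendsto_zero that)
    then show ?thesis using equilibrium_phi[OF equilibrium_given that] by simp
  qed
  then have input_lim: "((\<lambda>t. Emul p (\<lambda>j. g j (\<theta> t j)) i - Emul p ub i) \<longlongrightarrow> 0) at_top"
    unfolding Emul_def by (cases "i < p") auto
  let ?imb = "\<lambda>t. \<Sum>k<m. B i k * (f k (\<mu> t k) - f k (mub k))"
  have "((\<lambda>t. - ?imb t / tx i) \<longlongrightarrow> 0) at_top"
  proof (rule barbalat_slowly_varying[OF has_deriv_x[OF i]])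
    show "\<forall>t\<ge>0. rhs_x m p B f g d (\<mu> t) (\<theta> t) i / tx i =
      - ?imb t / tx i + (Emul p (\<lambda>j. g j (\<theta> t j)) i - Emul p ub i) / tx i"
      using equilibrium_flows[OF equilibrium_given i] unfolding rhs_x_def
      by (simp add: sum_subtractf right_diff_distrib add_divide_distrib[symmetric]
          diff_divide_distrib[symmetric])
    have "bdd_lipschitz (\<lambda>t. - ?imb t / tx i)"
      by (intro bdd_lipschitz_divide bdd_lipschitz_minus bdd_lipschitz_sum ballI bdd_lipschitz_cmult
          bdd_lipschitz_diff bdd_lipschitz_f_mu bdd_lipschitz_const) auto
    then show "lipschitz_halfline (\<lambda>t. - ?imb t / tx i)" unfolding bdd_lipschitz_def by blast
    from tendsto_divide[OF input_lim tendsto_const[of "tx i"]]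
    show "((\<lambda>t. (Emul p (\<lambda>j. g j (\<theta> t j)) i - Emul p ub i) / tx i) \<longlongrightarrow> 0) at_top" using tx by simp
    show "slowly_varying (\<lambda>t. x t i)" by (rule slowly_varying_if_convergent[OF x_tendsto[OF i]])
  qed
  from tendsto_mult[OF tendsto_const[of "- tx i"] this] show ?thesis using tx by simp
qed

end

section \<open>Convergence of the flow controller\<close>

context closed_loop begin

lemma mu_xi_convergent_subseq:
  "\<exists>\<sigma> mul xil. strict_mono \<sigma> \<and> (\<forall>k<m. (\<lambda>j. \<mu> (real (\<sigma> j)) k) \<longlonglongrightarrow> mul k) \<and>
     (\<forall>k<m. (\<lambda>j. \<xi> (real (\<sigma> j)) k) \<longlonglongrightarrow> xil k)"
proof -
  define s where "s j k = (if k < m then \<mu> (real j) k else \<xi> (real j) (k - m))" for j k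
  have "\<exists>M. \<forall>j. \<bar>s j k\<bar> \<le> M" if "k < 2 * m" for k
  proof (cases "k < m")
    case True
    then obtain M where "\<forall>t\<ge>0. \<bar>\<mu> t k\<bar> \<le> M" using bdd_mu unfolding bdd_halfline_def by blast
    then show ?thesis using True unfolding s_def by (intro exI[of _ M]) auto
  next
    case False
    then have "k - m < m" using that by simp
    then obtain M where "\<forall>t\<ge>0. \<bar>\<xi> t (k - m)\<bar> \<le> M"
      using bdd_xi unfolding bdd_halfline_def by blast
    then show ?thesis using False unfolding s_def by (intro exI[of _ M]) auto
  qed
  then obtain \<sigma> l where \<sigma>: "strict_mono \<sigma>" and l: "\<forall>k<2 * m. (\<lambda>j. s (\<sigma> j) k) \<longlonglongrightarrow> l k"
    using bounded_family_convergent_subseq[of "2 * m" s] by blast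
  have "\<forall>k<m. (\<lambda>j. \<mu> (real (\<sigma> j)) k) \<longlonglongrightarrow> l k"
  proof (intro allI impI)
    fix k assume "k < m"
    then show "(\<lambda>j. \<mu> (real (\<sigma> j)) k) \<longlonglongrightarrow> l k"
      using l[rule_format, of k] unfolding s_def by simp
  qed
  moreover have "\<forall>k<m. (\<lambda>j. \<xi> (real (\<sigma> j)) k) \<longlonglongrightarrow> l (k + m)"
  proof (intro allI impI)
    fix k assume "k < m"
    then show "(\<lambda>j. \<xi> (real (\<sigma> j)) k) \<longlonglongrightarrow> l (k + m)"
      using l[rule_format, of "k + m"] unfolding s_def by simp
  qed
  ultimately show ?thesis using \<sigma> by (intro exI[of _ \<sigma>] exI[of _ l] exI[of _ "\<lambda>k. l (k + m)"]) simp
qed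

context
  fixes \<sigma> :: "nat \<Rightarrow> nat" and mul xil :: "nat \<Rightarrow> real"
  assumes \<sigma>: "strict_mono \<sigma>"
    and mu_lim: "\<forall>k<m. (\<lambda>j. \<mu> (real (\<sigma> j)) k) \<longlonglongrightarrow> mul k"
    and xi_lim: "\<forall>k<m. (\<lambda>j. \<xi> (real (\<sigma> j)) k) \<longlonglongrightarrow> xil k"
begin

lemma f_mu_subseq_tendsto: "k < m \<Longrightarrow> (\<lambda>j. f k (\<mu> (real (\<sigma> j)) k)) \<longlonglongrightarrow> f k (mul k)"
  using isCont_tendsto_compose[OF _ mu_lim[rule_format]] C1_strict_incr_isCont f_C1 by blast

lemma subseq_limit_xi: "k < m \<Longrightarrow> xil k = f k (mul k)"
proof -
  assume k: "k < m"
  have "(\<lambda>j. f k (\<mu> (real (\<sigma> j)) k) - \<xi> (real (\<sigma> j)) k) \<longlonglongrightarrow> 0"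
    by (rule tendsto_along_strict_mono_nat[OF f_mu_minus_xi_tendsto_zero[OF k] \<sigma>])
  moreover have "(\<lambda>j. f k (\<mu> (real (\<sigma> j)) k) - \<xi> (real (\<sigma> j)) k) \<longlonglongrightarrow> f k (mul k) - xil k"
    using k by (intro tendsto_diff f_mu_subseq_tendsto xi_lim[rule_format])
  ultimately show ?thesis using LIMSEQ_unique by fastforce
qed

lemma subseq_limit_flow_balance: "i < n \<Longrightarrow> (\<Sum>k<m. B i k * (f k (mul k) - f k (mub k))) = 0"
proof -
  assume i: "i < n"
  have "(\<lambda>j. \<Sum>k<m. B i k * (f k (\<mu> (real (\<sigma> j)) k) - f k (mub k))) \<longlonglongrightarrow> 0"
    by (rule tendsto_along_strict_mono_nat[OF flow_imbalance_tendsto_zero[OF i] \<sigma>])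
  moreover have "(\<lambda>j. \<Sum>k<m. B i k * (f k (\<mu> (real (\<sigma> j)) k) - f k (mub k)))
      \<longlonglongrightarrow> (\<Sum>k<m. B i k * (f k (mul k) - f k (mub k)))"
    by (intro tendsto_sum tendsto_mult tendsto_diff tendsto_const f_mu_subseq_tendsto) auto
  ultimately show ?thesis using LIMSEQ_unique by blast
qed

lemma subseq_limit_equilibrium: "equilibrium xb mul xil thb phb"
proof -
  have eq: "(\<forall>i<n. rhs_x m p B f g d mub thb i = 0) \<and> (\<forall>k<m. rhs_mu n B h f ybar xb mub xib k = 0) \<and>
      (\<forall>k<m. rhs_xi f mub xib k = 0) \<and> (\<forall>i<p. rhs_theta h g ybar xb thb phb i = 0) \<and>
      (\<forall>i<p. rhs_phi p L q r g thb phb i = 0)"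
    using equilibrium_given unfolding equilibrium_def .
  have "rhs_x m p B f g d mul thb i = rhs_x m p B f g d mub thb i" if "i < n" for i
    using subseq_limit_flow_balance[OF that] unfolding rhs_x_def
    by (simp add: right_diff_distrib sum_subtractf)
  moreover have "rhs_mu n B h f ybar xb mul xil k = rhs_mu n B h f ybar xb mub xib k" if "k < m" for k
    using subseq_limit_xi[OF that] eq that unfolding rhs_mu_def rhs_xi_def by simp
  moreover have "rhs_xi f mul xil k = 0" if "k < m" for k
    using subseq_limit_xi[OF that] unfolding rhs_xi_def by simp
  ultimately show ?thesis using eq unfolding equilibrium_def by simp
qed

lemma lyap_subseq_limit_tendsto_zero: "(lyap xb mul xil thb phb \<longlongrightarrow> 0) at_top"
proof (rule tendsto_zero_if_antimono_along_subseq)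
  let ?x = "\<lambda>j. x (real (\<sigma> j))" and ?\<theta> = "\<lambda>j. \<theta> (real (\<sigma> j))" and ?\<phi> = "\<lambda>j. \<phi> (real (\<sigma> j))"
  have "(\<lambda>j. lyap xb mul xil thb phb (real (\<sigma> j))) \<longlonglongrightarrow>
      (\<Sum>i<n. tx i * bregman (h i) (xb i) (xb i)) + (\<Sum>k<m. tmu k * bregman (f k) (mul k) (mul k)) +
      (\<Sum>k<m. txi k * (xil k - xil k)^2 / 2) + (\<Sum>i<p. tth i * bregman (g i) (thb i) (thb i)) +
      (\<Sum>i<p. tph i * (phb i - phb i)^2 / 2)"
    unfolding lyap_def
    by (intro tendsto_add tendsto_sum tendsto_mult tendsto_divide tendsto_power tendsto_diff tendsto_const
        isCont_tendsto_compose[OF cont_strict_mono.isCont_bregman[OF cont_strict_mono_h]]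
        isCont_tendsto_compose[OF cont_strict_mono.isCont_bregman[OF cont_strict_mono_f]]
        isCont_tendsto_compose[OF cont_strict_mono.isCont_bregman[OF cont_strict_mono_g]]
        tendsto_along_strict_mono_nat[OF x_tendsto \<sigma>] tendsto_along_strict_mono_nat[OF theta_tendsto \<sigma>]
        tendsto_along_strict_mono_nat[OF phi_tendsto \<sigma>])
       (use mu_lim xi_lim in auto)
  then show "(\<lambda>j. lyap xb mul xil thb phb (real (\<sigma> j))) \<longlonglongrightarrow> 0"
    using cont_strict_mono.bregman_self[OF cont_strict_mono_h] cont_strict_mono.bregman_self[OF cont_strict_mono_f]
      cont_strict_mono.bregman_self[OF cont_strict_mono_g] by simp
qed (use lyap_antimono[OF subseq_limit_equilibrium] lyap_nonneg in auto)

lemma mu_tendsto: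
  assumes k: "k < m"
  shows "((\<lambda>t. \<mu> t k) \<longlongrightarrow> mul k) at_top"
proof (rule cont_strict_mono.tendsto_if_bregman_tendsto_zero[OF cont_strict_mono_f[OF k]])
  have "tmu k > 0" using tmu_pos k by blast
  moreover have "((\<lambda>t. tmu k * bregman (f k) (mul k) (\<mu> t k)) \<longlongrightarrow> 0) at_top"
    by (rule tendsto_zero_if_le_halfline[OF lyap_subseq_limit_tendsto_zero])
       (use lyap_ge_terms(2)[OF k] lyap_terms_nonneg(2)[OF k] in auto)
  ultimately show "((\<lambda>t. bregman (f k) (mul k) (\<mu> t k)) \<longlongrightarrow> 0) at_top"
    using tendsto_mult[OF tendsto_const[of "1 / tmu k"]] by fastforce
qed

lemma xi_tendsto:
  assumes k: "k < m"
  shows "((\<lambda>t. \<xi> t k) \<longlongrightarrow> xil k) at_top"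
proof -
  have "txi k > 0" using txi_pos k by blast
  moreover have "((\<lambda>t. txi k * (\<xi> t k - xil k)^2 / 2) \<longlongrightarrow> 0) at_top"
    by (rule tendsto_zero_if_le_halfline[OF lyap_subseq_limit_tendsto_zero])
       (use lyap_ge_terms(3)[OF k] lyap_terms_nonneg(3)[OF k] in auto)
  ultimately have "((\<lambda>t. (\<xi> t k - xil k)^2) \<longlongrightarrow> 0) at_top"
    using tendsto_mult[OF tendsto_const[of "2 / txi k"]] by fastforce
  then show ?thesis by (simp add: tendsto_zero_if_power2_tendsto_zero LIM_zero_iff)
qed

end

end

theorem theorem1:
  fixes n m p :: nat
    and epos eneg :: "nat \<Rightarrow> nat"
    and tx tmu txi tth tph q r d ybar :: "nat \<Rightarrow> real"
    and h f g :: "nat \<Rightarrow> real \<Rightarrow> real"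
    and a :: "nat \<Rightarrow> nat \<Rightarrow> real"
    and lam_lo lam_hi u_lo u_hi :: "nat \<Rightarrow> ereal"
    and xb mub xib thb phb :: "nat \<Rightarrow> real"
    and x \<mu> \<xi> \<theta> \<phi> :: "real \<Rightarrow> nat \<Rightarrow> real"
  defines "B \<equiv> incidence epos eneg"
      and "L \<equiv> laplacian p a"
      and "ub \<equiv> ubar n p q r d"
  assumes graph: "graph_ok n m epos eneg" and conn: "graph_connected n m epos eneg"
    and p_ge: "1 \<le> p" and p_le: "p \<le> n"
    and tx_pos: "\<forall>i<n. tx i > 0" and tmu_pos: "\<forall>k<m. tmu k > 0"
    and txi_pos: "\<forall>k<m. txi k > 0" and tth_pos: "\<forall>i<p. tth i > 0"
    and tph_pos: "\<forall>i<p. tph i > 0"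
    and h_C1: "\<forall>i<n. C1_strict_incr (h i)"
    and ybar_rng: "\<forall>i<n. ybar i \<in> range (h i)"
    and q_pos: "\<forall>i<p. q i > 0"
    and digraph: "weighted_digraph p a" and bal: "balanced p a"
    and sconn: "strongly_connected p a"
    and f_C1: "\<forall>k<m. C1_strict_incr (f k)"
    and lam_bnds: "\<forall>k<m. lam_lo k < lam_hi k"
    and f_rng: "\<forall>k<m. range (f k) = open_ival (lam_lo k) (lam_hi k)"
    and g_C1: "\<forall>i<p. C1_strict_incr (g i)"
    and u_bnds: "\<forall>i<p. u_lo i < u_hi i"
    and g_rng: "\<forall>i<p. range (g i) = open_ival (u_lo i) (u_hi i)"
    and omega: "\<exists>\<omega> :: nat \<Rightarrow> real. \<forall>k<m.
        (\<Sum>i<n. pinv n m B k i * (Emul p ub i - d i))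
        + (\<omega> k - (\<Sum>l<m. mmul n (pinv n m B) B k l * \<omega> l)) \<in> range (f k)"
    and ub_rng: "\<forall>i<p. ub i \<in> range (g i)"
    and equil: "(\<forall>i<n. rhs_x m p B f g d mub thb i = 0) \<and>
                (\<forall>k<m. rhs_mu n B h f ybar xb mub xib k = 0) \<and>
                (\<forall>k<m. rhs_xi f mub xib k = 0) \<and>
                (\<forall>i<p. rhs_theta h g ybar xb thb phb i = 0) \<and>
                (\<forall>i<p. rhs_phi p L q r g thb phb i = 0)"
    and sol: "\<forall>t\<ge>0.
        (\<forall>i<n. ((\<lambda>s. x s i) has_real_derivative
            rhs_x m p B f g d (\<mu> t) (\<theta> t) i / tx i) (at t within {0..})) \<and>
        (\<forall>k<m. ((\<lambda>s. \<mu> s k) has_real_derivative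
            rhs_mu n B h f ybar (x t) (\<mu> t) (\<xi> t) k / tmu k) (at t within {0..})) \<and>
        (\<forall>k<m. ((\<lambda>s. \<xi> s k) has_real_derivative
            rhs_xi f (\<mu> t) (\<xi> t) k / txi k) (at t within {0..})) \<and>
        (\<forall>i<p. ((\<lambda>s. \<theta> s i) has_real_derivative
            rhs_theta h g ybar (x t) (\<theta> t) (\<phi> t) i / tth i) (at t within {0..})) \<and>
        (\<forall>i<p. ((\<lambda>s. \<phi> s i) has_real_derivative
            rhs_phi p L q r g (\<theta> t) (\<phi> t) i / tph i) (at t within {0..}))"
  shows "(\<exists>xl mul xil thl phl :: nat \<Rightarrow> real.
            \<comment> \<open>convergence of the state\<close>
            (\<forall>i<n. ((\<lambda>t. x t i) \<longlongrightarrow> xl i) at_top) \<and>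
            (\<forall>k<m. ((\<lambda>t. \<mu> t k) \<longlongrightarrow> mul k) at_top) \<and>
            (\<forall>k<m. ((\<lambda>t. \<xi> t k) \<longlongrightarrow> xil k) at_top) \<and>
            (\<forall>i<p. ((\<lambda>t. \<theta> t i) \<longlongrightarrow> thl i) at_top) \<and>
            (\<forall>i<p. ((\<lambda>t. \<phi> t i) \<longlongrightarrow> phl i) at_top) \<and>
            \<comment> \<open>the limit lies in Upsilon_1\<close>
            (\<forall>i<n. (\<Sum>k<m. B i k * (f k (mul k) - f k (mub k))) = 0) \<and>
            (\<forall>i<n. (\<Sum>k<m. B i k * (xil k - xib k)) = 0) \<and>
            (\<forall>i<n. xl i = xb i) \<and> (\<forall>i<p. thl i = thb i) \<and> (\<forall>i<p. phl i = phb i) \<and>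
            \<comment> \<open>lambda tends to a constant, h(x) = ybar and u = ubar at the limit\<close>
            (\<forall>k<m. ((\<lambda>t. f k (\<mu> t k)) \<longlongrightarrow> f k (mul k)) at_top) \<and>
            (\<forall>i<n. h i (xl i) = ybar i) \<and>
            (\<forall>i<p. g i (thl i) = ub i)) \<and>
         (\<forall>t\<ge>0. (\<forall>i<p. u_lo i < ereal (g i (\<theta> t i)) \<and> ereal (g i (\<theta> t i)) < u_hi i) \<and>
                 (\<forall>k<m. lam_lo k < ereal (f k (\<mu> t k)) \<and> ereal (f k (\<mu> t k)) < lam_hi k))"
proof -
  interpret closed_loop n m p epos eneg tx tmu txi tth tph q r d ybar h f g a xb mub xib thb phb
      x \<mu> \<xi> \<theta> \<phi> B L ub
    unfolding closed_loop_def using assms by blast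
  obtain \<sigma> mul xil where \<sigma>: "strict_mono \<sigma>"
    and mu_lim: "\<forall>k<m. (\<lambda>j. \<mu> (real (\<sigma> j)) k) \<longlonglongrightarrow> mul k"
    and xi_lim: "\<forall>k<m. (\<lambda>j. \<xi> (real (\<sigma> j)) k) \<longlonglongrightarrow> xil k"
    using mu_xi_convergent_subseq by blast
  note conv = mu_tendsto[OF \<sigma> mu_lim xi_lim] xi_tendsto[OF \<sigma> mu_lim xi_lim]
  note limit = subseq_limit_xi[OF \<sigma> mu_lim xi_lim] subseq_limit_flow_balance[OF \<sigma> mu_lim xi_lim]
  have xi_balance: "\<forall>i<n. (\<Sum>k<m. B i k * (xil k - xib k)) = 0"
    using limit equilibrium_xi[OF equilibrium_given] by simp
  have flow_lim: "\<forall>k<m. ((\<lambda>t. f k (\<mu> t k)) \<longlongrightarrow> f k (mul k)) at_top"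
    using isCont_tendsto_compose[OF _ conv(1)] C1_strict_incr_isCont f_C1 by blast
  have bounds: "\<forall>t\<ge>0. (\<forall>i<p. u_lo i < ereal (g i (\<theta> t i)) \<and> ereal (g i (\<theta> t i)) < u_hi i) \<and>
      (\<forall>k<m. lam_lo k < ereal (f k (\<mu> t k)) \<and> ereal (f k (\<mu> t k)) < lam_hi k)"
    using g_rng f_rng unfolding open_ival_def by blast
  show ?thesis
    by (intro conjI exI[of _ xb] exI[of _ mul] exI[of _ xil] exI[of _ thb] exI[of _ phb] bounds flow_lim
        xi_balance allI impI x_tendsto theta_tendsto phi_tendsto conv limit refl
        equilibrium_output_error_zero[OF equilibrium_given] equilibrium_g_theta[OF equilibrium_given])
qed

end
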